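(* Let $A:\mathbb{R}^n\to\mathbb{R}^n$ be a nonsingular linear operator that is GSR (respectively, GSSR). Then $A^{-1}$ is GSR (respectively, GSSR). In particular, if $A$ is nonsingular and GTP (respectively, GSTP), then $A^{-1}$ is GTP (respectively, GSTP). Here each of these properties is understood with respect to some totally positive structure.
   Context: A proper cone is a closed convex cone that is pointed and solid. $\wedge^j\mathbb{R}^n$ is the $j$th exterior power and $\wedge^jA$ the operator with $(\wedge^jA)(x_1\wedge\cdots\wedge x_j)=Ax_1\wedge\cdots\wedge Ax_j$. $B$ is $K$-nonnegative if $BK\subseteq K$ and $K$-positive if $B(K\setminus\{0\})\subseteq\operatorname{int}K$. A totally positive structure is a family $\{K_1,\ldots,K_n\}$, $K_j\subset\wedge^j\mathbb{R}^n$ a proper cone. With respect to it, $A$ is GTP (GSTP) if $\wedge^jA$ is $K_j$-nonnegative ($K_j$-positive) for all $j=1,\ldots,n$, and GSR (GSSR) if there exist $\epsilon_1,\ldots,\epsilon_n\in\{\pm1\}$ with $\epsilon_j\wedge^jA$ $K_j$-nonnegative ($K_j$-positive) for all $j$. *)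

theory Defs
  imports "HOL-Analysis.Analysis" "Jordan_Normal_Form.Determinant" "Jordan_Normal_Form.DL_Submatrix"
begin

text \<open>The j-th exterior power of R^n is
represented in the standard basis e_S = e_s1 wedge ... wedge e_sj (s1 < ... < sj) as the
space of real functions on nat sets that vanish outside the j-element subsets of
{0..<n}.  The operator wedge^j A is then the j-th compound matrix of A, whose (S,T)
entry is the minor det A[S,T] (rows S, columns T, both in increasing order).\<close>

definition ksub :: "nat \<Rightarrow> nat \<Rightarrow> nat set set" where
  "ksub n j = {S. S \<subseteq> {..<n} \<and> card S = j}"

definition ext_space :: "nat \<Rightarrow> nat \<Rightarrow> (nat set \<Rightarrow> real) set" where
  "ext_space n j = {x. \<forall>S. S \<notin> ksub n j \<longrightarrow> x S = 0}"

definition compound :: "nat \<Rightarrow> nat \<Rightarrow> real mat \<Rightarrow> (nat set \<Rightarrow> real) \<Rightarrow> (nat set \<Rightarrow> real)" where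
  "compound n j A x = (\<lambda>S. if S \<in> ksub n j
       then (\<Sum>T\<in>ksub n j. det (submatrix A S T) * x T) else 0)"

definition rel_int :: "nat \<Rightarrow> nat \<Rightarrow> (nat set \<Rightarrow> real) set \<Rightarrow> (nat set \<Rightarrow> real) set" where
  "rel_int n j K = {x\<in>K. \<exists>e>0. \<forall>y\<in>ext_space n j.
       (\<forall>S\<in>ksub n j. \<bar>y S - x S\<bar> < e) \<longrightarrow> y \<in> K}"

definition proper_cone :: "nat \<Rightarrow> nat \<Rightarrow> (nat set \<Rightarrow> real) set \<Rightarrow> bool" where
  "proper_cone n j K \<longleftrightarrow>
     K \<subseteq> ext_space n j \<and>
     (\<forall>x\<in>K. \<forall>y\<in>K. \<forall>a\<ge>0. \<forall>b\<ge>0. (\<lambda>S. a * x S + b * y S) \<in> K) \<and>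
     closed K \<and>
     (\<forall>x\<in>K. (\<lambda>S. - x S) \<in> K \<longrightarrow> x = (\<lambda>_. 0)) \<and>
     rel_int n j K \<noteq> {}"

definition K_nonneg :: "(nat set \<Rightarrow> real) set \<Rightarrow> ((nat set \<Rightarrow> real) \<Rightarrow> (nat set \<Rightarrow> real)) \<Rightarrow> bool" where
  "K_nonneg K B \<longleftrightarrow> (\<forall>x\<in>K. B x \<in> K)"

definition K_pos :: "nat \<Rightarrow> nat \<Rightarrow> (nat set \<Rightarrow> real) set \<Rightarrow> ((nat set \<Rightarrow> real) \<Rightarrow> (nat set \<Rightarrow> real)) \<Rightarrow> bool" where
  "K_pos n j K B \<longleftrightarrow> (\<forall>x\<in>K - {\<lambda>_. 0}. B x \<in> rel_int n j K)"

definition tp_structure :: "nat \<Rightarrow> (nat \<Rightarrow> (nat set \<Rightarrow> real) set) \<Rightarrow> bool" where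
  "tp_structure n Ks \<longleftrightarrow> (\<forall>j\<in>{1..n}. proper_cone n j (Ks j))"

definition GTP :: "nat \<Rightarrow> (nat \<Rightarrow> (nat set \<Rightarrow> real) set) \<Rightarrow> real mat \<Rightarrow> bool" where
  "GTP n Ks A \<longleftrightarrow> (\<forall>j\<in>{1..n}. K_nonneg (Ks j) (compound n j A))"

definition GSTP :: "nat \<Rightarrow> (nat \<Rightarrow> (nat set \<Rightarrow> real) set) \<Rightarrow> real mat \<Rightarrow> bool" where
  "GSTP n Ks A \<longleftrightarrow> (\<forall>j\<in>{1..n}. K_pos n j (Ks j) (compound n j A))"

definition GSR :: "nat \<Rightarrow> (nat \<Rightarrow> (nat set \<Rightarrow> real) set) \<Rightarrow> real mat \<Rightarrow> bool" where
  "GSR n Ks A \<longleftrightarrow> (\<exists>\<epsilon>::nat \<Rightarrow> real. \<forall>j\<in>{1..n}. \<epsilon> j \<in> {-1, 1} \<and>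
       K_nonneg (Ks j) (\<lambda>x S. \<epsilon> j * compound n j A x S))"

definition GSSR :: "nat \<Rightarrow> (nat \<Rightarrow> (nat set \<Rightarrow> real) set) \<Rightarrow> real mat \<Rightarrow> bool" where
  "GSSR n Ks A \<longleftrightarrow> (\<exists>\<epsilon>::nat \<Rightarrow> real. \<forall>j\<in>{1..n}. \<epsilon> j \<in> {-1, 1} \<and>
       K_pos n j (Ks j) (\<lambda>x S. \<epsilon> j * compound n j A x S))"

end

theory Submission
  imports Defs
begin

text \<open>Let B be the inverse of A.  Jacobi's complementary minor formula
  det A * det B[S,T] = +-det A[complement T, complement S]
says that the j-th compound of B is, up to the factor 1/det A and conjugation by the Hodge
star (e_S to +-e_(complement S)), the transpose of the (n-j)-th compound of A.  Transposes act
on dual cones, so if eps * (compound n-j of A) maps the proper cone K_(n-j) into itself (into its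
interior), then eps * sgn (det A) * (compound j of B) does the same for the dual of the Hodge
image of K_(n-j); these dual cones form the structure for B.  In the GTP and GSTP cases all signs
are 1 and det A > 0, because the n-th compound is multiplication by det A and preserves the pointed
cone K_n.\<close>

section \<open>Jacobi's complementary minor formula\<close>

lemma pick_image_strict_mono:
  fixes g :: "nat \<Rightarrow> nat"
  assumes g: "strict_mono g" and XY: "g ` X = Y" and k: "k < card X \<or> infinite X"
  shows "g (pick X k) = pick Y k"
proof -
  let ?x = "pick X k"
  have xX: "?x \<in> X" using pick_in_set[OF k] .
  have "{a\<in>Y. a < g ?x} = g ` {a\<in>X. a < ?x}"
    using XY g by (auto simp: strict_mono_less)
  then have "card {a\<in>Y. a < g ?x} = card {a\<in>X. a < ?x}"
    using strict_mono_imp_inj_on[OF g] by (simp add: card_image inj_on_subset)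
  also have "\<dots> = k" using card_pick[OF k] .
  finally have "card {a\<in>Y. a < g ?x} = k" .
  moreover have "pick Y (card {a\<in>Y. a < g ?x}) = g ?x"
    using pick_card_in_set[of "g ?x" Y] XY xX by auto
  ultimately show ?thesis by simp
qed

lemma submatrix_cong:
  assumes "{i. i < dim_row M \<and> i \<in> I} = {i. i < dim_row M \<and> i \<in> I'}"
      and "{j. j < dim_col M \<and> j \<in> J} = {j. j < dim_col M \<and> j \<in> J'}"
  shows "submatrix M I J = submatrix M I' J'"
proof (rule eq_matI)
  show "dim_row (submatrix M I J) = dim_row (submatrix M I' J')"
    and "dim_col (submatrix M I J) = dim_col (submatrix M I' J')"
    using assms by (simp_all add: dim_submatrix)
  fix i j assume "i < dim_row (submatrix M I' J')" "j < dim_col (submatrix M I' J')"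
  then have ij: "i < card {i. i < dim_row M \<and> i \<in> I'}" "j < card {j. j < dim_col M \<and> j \<in> J'}"
    by (simp_all add: dim_submatrix)
  then have ij': "i < card {i. i < dim_row M \<and> i \<in> I}" "j < card {j. j < dim_col M \<and> j \<in> J}"
    using assms by simp_all
  have "pick I i = pick I' i" "pick J j = pick J' j"
    using pick_reduce_set[OF ij'(1)] pick_reduce_set[OF ij(1)]
      pick_reduce_set[OF ij'(2)] pick_reduce_set[OF ij(2)] assms by simp_all
  then show "submatrix M I J $$ (i, j) = submatrix M I' J' $$ (i, j)"
    using submatrix_index[OF ij] submatrix_index[OF ij'] by simp
qed

lemma submatrix_UNIV: "submatrix M UNIV UNIV = M"
  by (rule eq_matI) (auto simp: dim_submatrix submatrix_index pick_UNIV)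

lemma card_lessThan_Compl:
  assumes "R \<subseteq> {..<n}"
  shows "card {i. i < n \<and> i \<in> - R} = n - card R"
proof -
  have "{i. i < n \<and> i \<in> - R} = {..<n} - R" by auto
  then show ?thesis using assms by (simp add: card_Diff_subset finite_subset)
qed

lemma infinite_Compl_nat: "finite X \<Longrightarrow> infinite (- X :: nat set)"
  using Diff_infinite_finite[OF _ infinite_UNIV_nat] by (simp add: Compl_eq_Diff_UNIV)

lemma insert_index_image_Compl:
  assumes "finite R" "R \<noteq> {}"
  shows "insert_index (Max R) ` (- (R - {Max R})) = - R"
proof
  show "insert_index (Max R) ` (- (R - {Max R})) \<subseteq> - R"
  proof
    fix z assume "z \<in> insert_index (Max R) ` (- (R - {Max R}))"
    then obtain x where x: "x \<notin> R - {Max R}" "z = insert_index (Max R) x" by blast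
    show "z \<in> - R"
    proof (cases "x < Max R")
      case True then show ?thesis using x by auto
    next
      case False then show ?thesis using x Max_ge[OF assms(1)] by fastforce
    qed
  qed
  show "- R \<subseteq> insert_index (Max R) ` (- (R - {Max R}))"
  proof
    fix x assume x: "x \<in> - R"
    show "x \<in> insert_index (Max R) ` (- (R - {Max R}))"
    proof (cases "x < Max R")
      case True
      then show ?thesis using x by (auto simp: image_iff intro!: bexI[of _ x])
    next
      case False
      then have "Max R < x" using x Max_in[OF assms] by (cases "x = Max R") auto
      then obtain y where "x = Suc y" "Max R \<le> y" by (cases x) auto
      moreover have "y \<notin> R - {Max R}"
        using \<open>Max R \<le> y\<close> Max_ge[OF assms(1)] by (metis DiffE antisym singletonI)
      ultimately show ?thesis by (auto simp: image_iff intro!: bexI[of _ y])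
    qed
  qed
qed

lemma insert_index_Max_pick_Compl:
  assumes "finite R" "R \<noteq> {}"
  shows "insert_index (Max R) (pick (- (R - {Max R})) a) = pick (- R) a"
proof (rule pick_image_strict_mono[OF _ insert_index_image_Compl[OF assms]])
  show "strict_mono (insert_index (Max R))" by (auto simp: strict_mono_def insert_index_def)
  show "a < card (- (R - {Max R})) \<or> infinite (- (R - {Max R}))"
    using infinite_Compl_nat assms(1) by blast
qed

lemma submatrix_mat_delete_Max:
  assumes M: "M \<in> carrier_mat n n" and R: "R \<subseteq> {..<n}" "R \<noteq> {}" and U: "U \<subseteq> {..<n}" "U \<noteq> {}"
    and card: "card R = card U"
  shows "submatrix (mat_delete M (Max R) (Max U)) (- (R - {Max R})) (- (U - {Max U}))
       = submatrix M (- R) (- U)"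
proof -
  define r u where "r = Max R" and "u = Max U"
  have fin: "finite R" "finite U" using R U finite_subset by blast+
  have ru: "r \<in> R" "u \<in> U" using fin R U by (simp_all add: r_def u_def)
  then obtain n' where n': "n = Suc n'" using R by (cases n) auto
  have "x < r" if "x \<in> R - {r}" for x
    using that Max_ge[OF fin(1)] by (fastforce simp: r_def)
  moreover have "x < u" if "x \<in> U - {u}" for x
    using that Max_ge[OF fin(2)] by (fastforce simp: u_def)
  ultimately have sub': "R - {r} \<subseteq> {..<n'}" "U - {u} \<subseteq> {..<n'}"
    using R U ru n' by fastforce+
  define M' where "M' = mat_delete M r u"
  have M': "M' \<in> carrier_mat n' n'" using mat_delete_carrier[OF M] n' by (simp add: M'_def)
  have cardR: "card {i. i < n' \<and> i \<in> - (R - {r})} = n - card R"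
    and cardU: "card {i. i < n' \<and> i \<in> - (U - {u})} = n - card R"
  proof -
    have "0 < card R" using fin R by auto
    then have "n - card R = n' - (card R - 1)" using n' by simp
    then show "card {i. i < n' \<and> i \<in> - (R - {r})} = n - card R"
      and "card {i. i < n' \<and> i \<in> - (U - {u})} = n - card R"
      using card_lessThan_Compl[OF sub'(1)] card_lessThan_Compl[OF sub'(2)] fin ru card by simp_all
  qed
  show ?thesis
    unfolding r_def[symmetric] u_def[symmetric] M'_def[symmetric]
  proof (rule eq_matI)
    show "dim_row (submatrix M' (- (R - {r})) (- (U - {u}))) = dim_row (submatrix M (- R) (- U))"
      and "dim_col (submatrix M' (- (R - {r})) (- (U - {u}))) = dim_col (submatrix M (- R) (- U))"
      using M M' cardR cardU card_lessThan_Compl[OF R(1)] card_lessThan_Compl[OF U(1)] card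
      by (simp_all add: dim_submatrix)
    fix a b assume "a < dim_row (submatrix M (- R) (- U))" "b < dim_col (submatrix M (- R) (- U))"
    then have ab: "a < n - card R" "b < n - card R"
      using M card_lessThan_Compl[OF R(1)] card_lessThan_Compl[OF U(1)] card
      by (simp_all add: dim_submatrix)
    have ab': "a < card {i. i < dim_row M' \<and> i \<in> - (R - {r})}" "b < card {i. i < dim_col M' \<and> i \<in> - (U - {u})}"
      and ab'': "a < card {i. i < dim_row M \<and> i \<in> - R}" "b < card {i. i < dim_col M \<and> i \<in> - U}"
      using ab M M' cardR cardU card_lessThan_Compl[OF R(1)] card_lessThan_Compl[OF U(1)] card by simp_all
    have p: "pick (- (R - {r})) a < n'" "pick (- (U - {u})) b < n'"
      using pick_le[of a n' "- (R - {r})"] pick_le[of b n' "- (U - {u})"] ab cardR cardU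
      by (simp_all add: conj_commute)
    have "submatrix M' (- (R - {r})) (- (U - {u})) $$ (a, b) = M' $$ (pick (- (R - {r})) a, pick (- (U - {u})) b)"
      by (rule submatrix_index[OF ab'])
    also have "\<dots> = M $$ (insert_index r (pick (- (R - {r})) a), insert_index u (pick (- (U - {u})) b))"
      using p M n' by (simp add: M'_def mat_delete_def insert_index_def)
    also have "\<dots> = M $$ (pick (- R) a, pick (- U) b)"
      using insert_index_Max_pick_Compl[OF fin(1) R(2)] insert_index_Max_pick_Compl[OF fin(2) U(2)]
      by (simp add: r_def u_def)
    also have "\<dots> = submatrix M (- R) (- U) $$ (a, b)"
      by (rule submatrix_index[OF ab'', symmetric])
    finally show "submatrix M' (- (R - {r})) (- (U - {u})) $$ (a, b) = submatrix M (- R) (- U) $$ (a, b)" .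
  qed
qed


lemma mat_delete_Max_unit_columns:
  assumes M: "M \<in> carrier_mat n n" and U: "U \<subseteq> {..<n}" and R: "R \<subseteq> {..<n}"
    and card: "card U = card R"
    and unit: "\<And>c i. c \<in> U \<Longrightarrow> i < n \<Longrightarrow> M $$ (i, c) = (if i = pick R (card {a\<in>U. a < c}) then 1 else 0)"
    and c: "c \<in> U - {Max U}" and i: "i < n - 1"
  shows "mat_delete M (Max R) (Max U) $$ (i, c)
       = (if i = pick (R - {Max R}) (card {a\<in>U - {Max U}. a < c}) then 1 else 0)"
proof -
  define u r where "u = Max U" and "r = Max R"
  have fin: "finite U" "finite R" using U R finite_subset by blast+
  moreover have "U \<noteq> {}" "R \<noteq> {}" using c card fin by auto
  ultimately have ur: "u \<in> U" "r \<in> R" by (simp_all add: u_def r_def)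
  have cu: "c < u" using c Max_ge[OF fin(1)] by (fastforce simp: u_def)
  let ?k = "card {a\<in>U - {u}. a < c}"
  have rank_c: "?k = card {a\<in>U. a < c}"
    using cu by (intro arg_cong[where f = card]) auto
  have "{a\<in>U - {u}. a < c} \<subset> U - {u}" using c by (auto simp: u_def)
  then have "?k < card (U - {u})" by (rule psubset_card_mono[rotated]) (use fin in simp)
  then have "?k < card (R - {r})" using card fin ur by simp
  then have "pick (R - {r}) ?k \<in> R - {r}" by (rule pick_in_set[OF disjI1])
  then have below_r: "pick (R - {r}) ?k < r" using Max_ge[OF fin(2)] by (fastforce simp: r_def)
  have "{a. a < r \<and> a \<in> R} = {a. a < r \<and> a \<in> R - {r}}" by auto
  moreover have "{a. a < r \<and> a \<in> R - {r}} = R - {r}" using Max_ge[OF fin(2)] by (fastforce simp: r_def)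
  ultimately have pick_eq: "pick R ?k = pick (R - {r}) ?k"
    using pick_reduce_set[of ?k r R] pick_reduce_set[of ?k r "R - {r}"] \<open>?k < card (R - {r})\<close> by simp
  have "c < n - 1" using cu ur U by auto
  then have "mat_delete M r u $$ (i, c) = M $$ (insert_index r i, c)"
    using M i cu by (auto simp: mat_delete_def insert_index_def)
  also have "\<dots> = (if insert_index r i = pick R (card {a\<in>U. a < c}) then 1 else 0)"
    using unit[of c "insert_index r i"] c i ur R by (auto simp: insert_index_def)
  also have "\<dots> = (if i = pick (R - {r}) ?k then 1 else 0)"
  proof -
    have p: "pick R (card {a\<in>U. a < c}) = pick (R - {r}) ?k" using pick_eq rank_c by simp
    show ?thesis unfolding p using below_r by (auto simp: insert_index_def)
  qed
  finally show ?thesis by (simp add: u_def r_def)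
qed

text \<open>The columns of M indexed by U are unit vectors, the one of rank k in U pointing to
the element of rank k in R; expand along the largest of them.\<close>

lemma det_unit_columns:
  assumes "M \<in> carrier_mat n n" "U \<subseteq> {..<n}" "R \<subseteq> {..<n}" "card U = k" "card R = k"
    and "\<And>c i. c \<in> U \<Longrightarrow> i < n \<Longrightarrow> M $$ (i, c) = (if i = pick R (card {a\<in>U. a < c}) then 1 else 0)"
  shows "det M = (-1) ^ (\<Sum>R + \<Sum>U) * det (submatrix M (- R) (- U))"
  using assms
proof (induction k arbitrary: n M U R)
  case 0
  then have "U = {}" "R = {}" using finite_subset[of _ "{..<n}"] by auto
  then show ?case by (simp add: submatrix_UNIV)
next
  case (Suc k)
  have fin: "finite U" "finite R" using Suc.prems(2,3) finite_subset by blast+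
  then have ne: "U \<noteq> {}" "R \<noteq> {}" using Suc.prems(4,5) by auto
  define u r where "u = Max U" and "r = Max R"
  have ur: "u \<in> U" "r \<in> R" using fin ne by (simp_all add: u_def r_def)
  have "{a\<in>U. a < u} = U - {u}" "{a\<in>R. a < r} = R - {r}"
    using Max_ge[OF fin(1)] Max_ge[OF fin(2)] by (fastforce simp: u_def r_def)+
  then have rank_u: "card {a\<in>U. a < u} = k" and "card {a\<in>R. a < r} = k"
    using Suc.prems(4,5) ur fin by simp_all
  then have "pick R k = r" using pick_card_in_set[OF ur(2)] by simp
  then have col_u: "M $$ (i, u) = (if i = r then 1 else 0)" if "i < n" for i
    using Suc.prems(6)[OF ur(1) that] rank_u by simp
  have un: "u < n" and rn: "r < n" using ur Suc.prems(2,3) by auto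
  define M' where "M' = mat_delete M r u"
  have M': "M' \<in> carrier_mat (n - 1) (n - 1)" using mat_delete_carrier[OF Suc.prems(1)] by (simp add: M'_def)
  have "det M = (\<Sum>i<n. M $$ (i, u) * cofactor M i u)"
    by (rule laplace_expansion_column[OF Suc.prems(1) un])
  also have "\<dots> = (\<Sum>i<n. if i = r then cofactor M i u else 0)"
    by (rule sum.cong) (auto simp: col_u)
  also have "\<dots> = cofactor M r u" using rn by simp
  finally have det_M: "det M = (-1)^(r+u) * det M'" by (simp add: cofactor_def M'_def)
  have "U - {u} \<subseteq> {..<n - 1}" "R - {r} \<subseteq> {..<n - 1}"
    using Max_ge[OF fin(1)] Max_ge[OF fin(2)] un rn by (fastforce simp: u_def r_def)+
  moreover have "card (U - {u}) = k" "card (R - {r}) = k" using Suc.prems(4,5) ur fin by simp_all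
  ultimately have "det M' = (-1) ^ (\<Sum>(R - {r}) + \<Sum>(U - {u})) * det (submatrix M' (- (R - {r})) (- (U - {u})))"
    using mat_delete_Max_unit_columns[OF Suc.prems(1-3) _ Suc.prems(6)] Suc.prems(4,5)
    by (intro Suc.IH[OF M']) (simp_all add: M'_def u_def r_def)
  also have "submatrix M' (- (R - {r})) (- (U - {u})) = submatrix M (- R) (- U)"
    unfolding M'_def r_def u_def
    by (rule submatrix_mat_delete_Max) (use Suc.prems ne in auto)
  finally have det_M': "det M' = (-1) ^ (\<Sum>(R - {r}) + \<Sum>(U - {u})) * det (submatrix M (- R) (- U))" .
  have "\<Sum>R = \<Sum>(R - {r}) + r" "\<Sum>U = \<Sum>(U - {u}) + u"
    using ur fin by (simp_all add: sum.remove)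
  then show ?case using det_M det_M' by (simp add: power_add algebra_simps)
qed

definition compl_sign :: "nat \<Rightarrow> nat set \<Rightarrow> 'a :: comm_ring_1" where
  "compl_sign n X = (-1) ^ (\<Sum>({..<n} - X))"

lemma compl_sign_square [simp]: "compl_sign n X * compl_sign n X = 1"
  unfolding compl_sign_def by (simp flip: power_add)

text \<open>B with its columns outside T replaced by unit vectors, the complements of T and S
being matched by rank.  Its determinant is the minor B[S,T] up to sign, while multiplying it
by an inverse A of B leaves unit columns on T and the columns of A outside S elsewhere.\<close>

definition unit_completion :: "nat \<Rightarrow> 'a :: comm_ring_1 mat \<Rightarrow> nat set \<Rightarrow> nat set \<Rightarrow> 'a mat" where
  "unit_completion n B S T = mat n n (\<lambda>(i, c). if c \<in> T then B $$ (i, c)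
     else if i = pick ({..<n} - S) (card {a\<in>{..<n} - T. a < c}) then 1 else 0)"

lemma pick_Compl_rank_in:
  assumes S: "S \<subseteq> {..<n}" and T: "T \<subseteq> {..<n}" and card: "card S = card T"
    and c: "c \<in> {..<n} - T"
  shows "pick ({..<n} - S) (card {a\<in>{..<n} - T. a < c}) \<in> {..<n} - S"
proof -
  have "{a\<in>{..<n} - T. a < c} \<subset> {..<n} - T" using c by auto
  then have "card {a\<in>{..<n} - T. a < c} < card ({..<n} - S)"
    using S T card psubset_card_mono[of "{..<n} - T"] by (simp add: card_Diff_subset finite_subset)
  then show ?thesis by (rule pick_in_set[OF disjI1])
qed

lemma det_unit_completion:
  assumes B: "B \<in> carrier_mat n n" and S: "S \<subseteq> {..<n}" and T: "T \<subseteq> {..<n}"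
    and card: "card S = card T"
  shows "det (unit_completion n B S T) = compl_sign n S * compl_sign n T * det (submatrix B S T)"
proof -
  define Y where "Y = unit_completion n B S T"
  have Y: "Y \<in> carrier_mat n n" by (simp add: Y_def unit_completion_def)
  have "card ({..<n} - S) = card ({..<n} - T)"
    using S T card by (simp add: card_Diff_subset finite_subset)
  then have "det Y = (-1) ^ (\<Sum>({..<n} - S) + \<Sum>({..<n} - T))
      * det (submatrix Y (- ({..<n} - S)) (- ({..<n} - T)))"
    by (intro det_unit_columns[OF Y Diff_subset Diff_subset refl]) (simp_all add: Y_def unit_completion_def)
  also have "submatrix Y (- ({..<n} - S)) (- ({..<n} - T)) = submatrix Y S T"
    by (rule submatrix_cong) (use Y S T in auto)
  also have "\<dots> = submatrix B S T"
  proof (rule eq_matI)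
    show "dim_row (submatrix Y S T) = dim_row (submatrix B S T)"
      and "dim_col (submatrix Y S T) = dim_col (submatrix B S T)"
      using Y B by (simp_all add: dim_submatrix)
    fix i j assume "i < dim_row (submatrix B S T)" "j < dim_col (submatrix B S T)"
    then have ij: "i < card {i. i < dim_row Y \<and> i \<in> S}" "j < card {j. j < dim_col Y \<and> j \<in> T}"
      and ij': "i < card {i. i < dim_row B \<and> i \<in> S}" "j < card {j. j < dim_col B \<and> j \<in> T}"
      using Y B by (simp_all add: dim_submatrix)
    have "pick S i < n" "pick T j < n"
      using pick_le ij Y by (simp_all add: conj_commute)
    moreover have "pick T j \<in> T"
    proof -
      have "{j. j < dim_col Y \<and> j \<in> T} = T" using T Y by auto
      then show ?thesis using pick_in_set[of j T] ij(2) by simp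
    qed
    ultimately show "submatrix Y S T $$ (i, j) = submatrix B S T $$ (i, j)"
      using submatrix_index[OF ij] submatrix_index[OF ij'] by (simp add: Y_def unit_completion_def)
  qed
  finally show ?thesis by (simp add: Y_def compl_sign_def power_add)
qed

lemma mult_unit_completion_index:
  assumes A: "A \<in> carrier_mat n n" and B: "B \<in> carrier_mat n n" and AB: "A * B = 1\<^sub>m n"
    and S: "S \<subseteq> {..<n}" and T: "T \<subseteq> {..<n}" and card: "card S = card T"
    and i: "i < n" and c: "c < n"
  shows "(A * unit_completion n B S T) $$ (i, c) = (if c \<in> T then (if i = c then 1 else 0)
           else A $$ (i, pick ({..<n} - S) (card {a\<in>{..<n} - T. a < c})))"
proof (cases "c \<in> T")
  case True
  have "(A * unit_completion n B S T) $$ (i, c) = (A * B) $$ (i, c)"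
    using A B i c True by (simp add: scalar_prod_def unit_completion_def)
  then show ?thesis using AB i c True by simp
next
  case False
  define p where "p = pick ({..<n} - S) (card {a\<in>{..<n} - T. a < c})"
  have "p < n" using pick_Compl_rank_in[OF S T card] c False by (simp add: p_def)
  have "(A * unit_completion n B S T) $$ (i, c) = (\<Sum>k<n. A $$ (i, k) * (if k = p then 1 else 0))"
    using A i c False by (simp add: scalar_prod_def unit_completion_def p_def atLeast0LessThan)
  also have "\<dots> = A $$ (i, p)" using \<open>p < n\<close> by (simp add: if_distrib cong: if_cong)
  finally show ?thesis using False by (simp add: p_def)
qed

lemma det_mult_unit_completion:
  assumes A: "A \<in> carrier_mat n n" and B: "B \<in> carrier_mat n n" and AB: "A * B = 1\<^sub>m n"
    and S: "S \<subseteq> {..<n}" and T: "T \<subseteq> {..<n}" and card: "card S = card T"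
  shows "det (A * unit_completion n B S T) = det (submatrix A ({..<n} - T) ({..<n} - S))"
proof -
  define Y where "Y = unit_completion n B S T"
  have Y: "Y \<in> carrier_mat n n" by (simp add: Y_def unit_completion_def)
  have AY: "A * Y \<in> carrier_mat n n" using A Y by simp
  note AY_index = mult_unit_completion_index[OF A B AB S T card, folded Y_def]
  have "det (A * Y) = (-1) ^ (\<Sum>T + \<Sum>T) * det (submatrix (A * Y) (- T) (- T))"
  proof (rule det_unit_columns[OF AY T T refl refl])
    fix c i assume c: "c \<in> T" and i: "i < n"
    have "pick T (card {a\<in>T. a < c}) = c" by (rule pick_card_in_set[OF c])
    then show "(A * Y) $$ (i, c) = (if i = pick T (card {a\<in>T. a < c}) then 1 else 0)"
      using AY_index[OF i] c T by auto
  qed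
  also have "(-1) ^ (\<Sum>T + \<Sum>T) = (1 :: 'a)" by (simp flip: power_add)
  also have "submatrix (A * Y) (- T) (- T) = submatrix (A * Y) ({..<n} - T) (- T)"
    by (rule submatrix_cong) (use AY in auto)
  also have "\<dots> = submatrix A ({..<n} - T) ({..<n} - S)"
  proof (rule eq_matI)
    have cols: "card {j. j < n \<and> j \<in> - T} = card {j. j < n \<and> j \<in> {..<n} - S}"
    proof -
      have "{j. j < n \<and> j \<in> {..<n} - S} = {j. j < n \<and> j \<in> - S}" by auto
      then show ?thesis using card_lessThan_Compl[OF T] card_lessThan_Compl[OF S] card by simp
    qed
    show "dim_row (submatrix (A * Y) ({..<n} - T) (- T)) = dim_row (submatrix A ({..<n} - T) ({..<n} - S))"
      and "dim_col (submatrix (A * Y) ({..<n} - T) (- T)) = dim_col (submatrix A ({..<n} - T) ({..<n} - S))"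
      using AY A cols Y by (simp_all add: dim_submatrix)
    fix a b assume "a < dim_row (submatrix A ({..<n} - T) ({..<n} - S))"
      "b < dim_col (submatrix A ({..<n} - T) ({..<n} - S))"
    then have ab': "a < card {i. i < dim_row A \<and> i \<in> {..<n} - T}" "b < card {j. j < dim_col A \<and> j \<in> {..<n} - S}"
      by (simp_all add: dim_submatrix)
    then have ab: "a < card {i. i < dim_row (A * Y) \<and> i \<in> {..<n} - T}" "b < card {j. j < dim_col (A * Y) \<and> j \<in> - T}"
      using A AY cols Y by simp_all
    have pa: "pick ({..<n} - T) a < n" using pick_le[of a n "{..<n} - T"] ab' A by (simp add: conj_commute)
    have pb: "pick (- T) b < n" using pick_le[of b n "- T"] ab AY Y by (simp add: conj_commute)
    have inf: "infinite (- T)" using infinite_Compl_nat T finite_subset by blast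
    have "pick (- T) b \<notin> T" using pick_in_set[of b "- T"] inf by simp
    moreover have "card {x\<in>{..<n} - T. x < pick (- T) b} = b"
    proof -
      have "{x\<in>{..<n} - T. x < pick (- T) b} = {x\<in>- T. x < pick (- T) b}" using pb by auto
      then show ?thesis using card_pick[of b "- T"] inf by simp
    qed
    ultimately show "submatrix (A * Y) ({..<n} - T) (- T) $$ (a, b) = submatrix A ({..<n} - T) ({..<n} - S) $$ (a, b)"
      using submatrix_index[OF ab] submatrix_index[OF ab'] AY_index[OF pa pb] by simp
  qed
  finally show ?thesis by (simp add: Y_def)
qed

lemma det_neq_0_if_right_inverse:
  assumes "A \<in> carrier_mat n n" "B \<in> carrier_mat n n" "A * B = 1\<^sub>m n"
  shows "det A \<noteq> (0 :: 'a :: comm_ring_1)"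
  using det_mult[OF assms(1,2)] assms(3) by auto

theorem jacobi_complementary_minor:
  fixes A B :: "'a :: comm_ring_1 mat"
  assumes A: "A \<in> carrier_mat n n" and B: "B \<in> carrier_mat n n" and AB: "A * B = 1\<^sub>m n"
    and S: "S \<subseteq> {..<n}" and T: "T \<subseteq> {..<n}" and card: "card S = card T"
  shows "det A * (compl_sign n S * compl_sign n T * det (submatrix B S T))
       = det (submatrix A ({..<n} - T) ({..<n} - S))"
proof -
  have "unit_completion n B S T \<in> carrier_mat n n" by (simp add: unit_completion_def)
  then have "det A * det (unit_completion n B S T) = det (A * unit_completion n B S T)"
    using det_mult[OF A] by simp
  then show ?thesis using det_unit_completion[OF B S T card] det_mult_unit_completion[OF A B AB S T card]
    by simp
qed


section \<open>Proper cones in the exterior power and their duals\<close>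

definition ext_inner :: "nat \<Rightarrow> nat \<Rightarrow> (nat set \<Rightarrow> real) \<Rightarrow> (nat set \<Rightarrow> real) \<Rightarrow> real" where
  "ext_inner n j x y = (\<Sum>S\<in>ksub n j. x S * y S)"

definition dual_cone :: "nat \<Rightarrow> nat \<Rightarrow> (nat set \<Rightarrow> real) set \<Rightarrow> (nat set \<Rightarrow> real) set" where
  "dual_cone n j L = {y \<in> ext_space n j. \<forall>x\<in>L. 0 \<le> ext_inner n j x y}"

lemma finite_ksub [simp]: "finite (ksub n j)"
  unfolding ksub_def by (rule finite_subset[of _ "Pow {..<n}"]) auto

declare continuous_on_product_coordinates [continuous_intros]

lemma continuous_on_ext_inner_left: "continuous_on UNIV (\<lambda>x. ext_inner n j x y)"
  unfolding ext_inner_def by (intro continuous_intros)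

lemma continuous_on_ext_inner_right: "continuous_on UNIV (\<lambda>y. ext_inner n j x y)"
  unfolding ext_inner_def by (intro continuous_intros)

lemma ext_inner_zero_left [simp]: "ext_inner n j (\<lambda>_. 0) y = 0"
  unfolding ext_inner_def by simp

lemma ext_inner_scale_left: "ext_inner n j (\<lambda>S. c * x S) y = c * ext_inner n j x y"
  unfolding ext_inner_def by (simp add: sum_distrib_left mult.assoc)

lemma ext_inner_uminus_left: "ext_inner n j (\<lambda>S. - x S) y = - ext_inner n j x y"
  using ext_inner_scale_left[of n j "-1" x y] by simp

lemma ext_inner_comb_right:
  "ext_inner n j x (\<lambda>S. a * y1 S + b * y2 S) = a * ext_inner n j x y1 + b * ext_inner n j x y2"
  unfolding ext_inner_def by (simp add: sum.distrib sum_distrib_left algebra_simps)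

lemma closed_ext_space: "closed (ext_space n j)"
proof -
  have "ext_space n j = (\<Inter>S\<in>- ksub n j. {x. x S = 0})"
    unfolding ext_space_def by auto
  moreover have "closed {x::nat set \<Rightarrow> real. x S = 0}" for S
    by (rule closed_Collect_eq) (intro continuous_intros)+
  ultimately show ?thesis by auto
qed

lemma ext_space_eqI:
  assumes "x \<in> ext_space n j" "y \<in> ext_space n j" "\<And>S. S \<in> ksub n j \<Longrightarrow> x S = y S"
  shows "x = y"
proof
  fix S show "x S = y S" using assms by (cases "S \<in> ksub n j") (auto simp: ext_space_def)
qed

lemma ext_space_nonzero_coordinate:
  assumes "x \<in> ext_space n j" "x \<noteq> (\<lambda>_. 0)"
  obtains S where "S \<in> ksub n j" "x S \<noteq> 0"
  using ext_space_eqI[OF assms(1), of "\<lambda>_. 0"] assms by (auto simp: ext_space_def)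

lemma ext_space_abs_sum_pos:
  assumes "x \<in> ext_space n j" "x \<noteq> (\<lambda>_. 0)"
  shows "0 < (\<Sum>S\<in>ksub n j. \<bar>x S\<bar>)"
proof -
  obtain S where S: "S \<in> ksub n j" "x S \<noteq> 0" using ext_space_nonzero_coordinate[OF assms] .
  have "\<bar>x S\<bar> \<le> (\<Sum>S\<in>ksub n j. \<bar>x S\<bar>)"
    by (rule member_le_sum[where f = "\<lambda>S. \<bar>x S\<bar>"]) (use S in auto)
  then show ?thesis using S by simp
qed

lemma rel_int_subset: "rel_int n j L \<subseteq> L"
  unfolding rel_int_def by auto

lemma proper_cone_subset: "proper_cone n j L \<Longrightarrow> L \<subseteq> ext_space n j"
  and proper_cone_comb: "proper_cone n j L \<Longrightarrow> x \<in> L \<Longrightarrow> y \<in> L \<Longrightarrow> a \<ge> 0 \<Longrightarrow> b \<ge> 0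
    \<Longrightarrow> (\<lambda>S. a * x S + b * y S) \<in> L"
  and proper_cone_closed: "proper_cone n j L \<Longrightarrow> closed L"
  and proper_cone_pointed: "proper_cone n j L \<Longrightarrow> x \<in> L \<Longrightarrow> (\<lambda>S. - x S) \<in> L \<Longrightarrow> x = (\<lambda>_. 0)"
  and proper_cone_rel_int_nonempty: "proper_cone n j L \<Longrightarrow> rel_int n j L \<noteq> {}"
  unfolding proper_cone_def by auto

lemma proper_cone_scale: "proper_cone n j L \<Longrightarrow> x \<in> L \<Longrightarrow> a \<ge> 0 \<Longrightarrow> (\<lambda>S. a * x S) \<in> L"
  using proper_cone_comb[of n j L x x a 0] by simp

lemma proper_cone_zero:
  assumes pc: "proper_cone n j L"
  shows "(\<lambda>_. 0) \<in> L"
proof -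
  obtain x where "x \<in> L" using proper_cone_rel_int_nonempty[OF pc] rel_int_subset by blast
  then show ?thesis using proper_cone_scale[OF pc, of x 0] by simp
qed

lemma rel_int_scale:
  assumes pc: "proper_cone n j K" and x: "x \<in> rel_int n j K" and c: "c > 0"
  shows "(\<lambda>S. c * x S) \<in> rel_int n j K"
proof -
  obtain e where e: "e > 0" "\<forall>y\<in>ext_space n j. (\<forall>S\<in>ksub n j. \<bar>y S - x S\<bar> < e) \<longrightarrow> y \<in> K"
    and xK: "x \<in> K" using x unfolding rel_int_def by blast
  have "\<forall>y\<in>ext_space n j. (\<forall>S\<in>ksub n j. \<bar>y S - c * x S\<bar> < c * e) \<longrightarrow> y \<in> K"
  proof (intro ballI impI)
    fix y assume y: "y \<in> ext_space n j" and close: "\<forall>S\<in>ksub n j. \<bar>y S - c * x S\<bar> < c * e"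
    have "\<bar>(1/c) * y S - x S\<bar> < e" if S: "S \<in> ksub n j" for S
    proof -
      have "(1/c) * (y S - c * x S) = (1/c) * y S - x S" using c by (simp add: right_diff_distrib)
      moreover have "\<bar>(1/c) * (y S - c * x S)\<bar> = (1/c) * \<bar>y S - c * x S\<bar>"
        using c by (simp add: abs_mult)
      ultimately have "\<bar>(1/c) * y S - x S\<bar> = (1/c) * \<bar>y S - c * x S\<bar>" by simp
      also have "\<dots> < (1/c) * (c * e)"
        using close S c by (intro mult_strict_left_mono) auto
      finally show ?thesis using c by simp
    qed
    moreover have "(\<lambda>S. (1/c) * y S) \<in> ext_space n j" using y by (simp add: ext_space_def)
    ultimately have "(\<lambda>S. (1/c) * y S) \<in> K" using e(2) by simp
    then have "(\<lambda>S. c * ((1/c) * y S)) \<in> K" by (rule proper_cone_scale[OF pc]) (use c in simp)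
    then show "y \<in> K" using c by simp
  qed
  moreover have "(\<lambda>S. c * x S) \<in> K" using proper_cone_scale[OF pc xK] c by simp
  moreover have "c * e > 0" using c e(1) by simp
  ultimately show ?thesis unfolding rel_int_def by blast
qed

lemma compact_PiE_UNIV:
  assumes "\<And>i. compact (X i)"
  shows "compact (PiE UNIV X :: ('a \<Rightarrow> real) set)"
proof -
  have "compactin (product_topology (\<lambda>i. euclidean) UNIV) (PiE UNIV X)"
    by (simp add: compactin_PiE assms)
  then show ?thesis by (simp add: euclidean_product_topology)
qed

lemma compact_proper_cone_bounded_Int:
  assumes pc: "proper_cone n j L" and C: "closed C"
    and bounded: "\<And>x S. x \<in> L \<Longrightarrow> x \<in> C \<Longrightarrow> S \<in> ksub n j \<Longrightarrow> \<bar>x S - w S\<bar> \<le> b"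
  shows "compact (L \<inter> C)"
proof -
  define X where "X S = (if S \<in> ksub n j then {w S - b .. w S + b} else {0::real})" for S
  have "L \<inter> C \<subseteq> PiE UNIV X"
  proof
    fix x assume x: "x \<in> L \<inter> C"
    have "x S \<in> X S" for S
    proof (cases "S \<in> ksub n j")
      case True
      then show ?thesis using bounded[of x S] x by (auto simp: X_def abs_le_iff)
    next
      case False
      then show ?thesis using x proper_cone_subset[OF pc] by (auto simp: X_def ext_space_def)
    qed
    then show "x \<in> PiE UNIV X" by auto
  qed
  moreover have "compact (PiE UNIV X)" by (rule compact_PiE_UNIV) (simp add: X_def)
  then have "compact (PiE UNIV X \<inter> (L \<inter> C))"
    by (rule compact_Int_closed[OF _ closed_Int[OF proper_cone_closed[OF pc] C]])
  ultimately show ?thesis by (simp add: Int_absorb1)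
qed

lemma proper_cone_normalize:
  assumes pc: "proper_cone n j L" and x: "x \<in> L" "x \<noteq> (\<lambda>_. 0)"
  defines "s \<equiv> (\<Sum>S\<in>ksub n j. \<bar>x S\<bar>)"
  shows "0 < s" "(\<lambda>S. (1/s) * x S) \<in> L" "(\<Sum>S\<in>ksub n j. \<bar>(1/s) * x S\<bar>) = 1"
    "\<And>y. ext_inner n j x y = s * ext_inner n j (\<lambda>S. (1/s) * x S) y"
proof -
  have xe: "x \<in> ext_space n j" using proper_cone_subset[OF pc] x by auto
  show s0: "0 < s" unfolding s_def by (rule ext_space_abs_sum_pos[OF xe x(2)])
  show "(\<lambda>S. (1/s) * x S) \<in> L" using proper_cone_scale[OF pc x(1), of "1/s"] s0 by simp
  show "(\<Sum>S\<in>ksub n j. \<bar>(1/s) * x S\<bar>) = 1"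
    using s0 by (simp add: abs_mult s_def sum_divide_distrib[symmetric])
  fix y show "ext_inner n j x y = s * ext_inner n j (\<lambda>S. (1/s) * x S) y"
    unfolding ext_inner_scale_left using s0 by simp
qed

lemma compact_proper_cone_base:
  assumes pc: "proper_cone n j L"
  shows "compact (L \<inter> {x. (\<Sum>S\<in>ksub n j. \<bar>x S\<bar>) = 1})"
proof (rule compact_proper_cone_bounded_Int[OF pc, where w = "\<lambda>_. 0" and b = 1])
  show "closed {x :: nat set \<Rightarrow> real. (\<Sum>S\<in>ksub n j. \<bar>x S\<bar>) = 1}"
    by (rule closed_Collect_eq) (intro continuous_intros)+
  fix x :: "nat set \<Rightarrow> real" and S
  assume "x \<in> {x. (\<Sum>S\<in>ksub n j. \<bar>x S\<bar>) = 1}" "S \<in> ksub n j"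
  then show "\<bar>x S - 0\<bar> \<le> 1"
    using member_le_sum[of S "ksub n j" "\<lambda>S. \<bar>x S\<bar>"] by simp
qed


definition ext_sqdist :: "nat \<Rightarrow> nat \<Rightarrow> (nat set \<Rightarrow> real) \<Rightarrow> (nat set \<Rightarrow> real) \<Rightarrow> real" where
  "ext_sqdist n j w x = (\<Sum>S\<in>ksub n j. (x S - w S)^2)"

lemma continuous_on_ext_sqdist: "continuous_on UNIV (ext_sqdist n j w)"
  unfolding ext_sqdist_def by (intro continuous_intros)

lemma ext_sqdist_add_scaled:
  "ext_sqdist n j w (\<lambda>S. p S + t * x S)
     = ext_sqdist n j w p + t * (2 * (\<Sum>S\<in>ksub n j. x S * (p S - w S)) + t * (\<Sum>S\<in>ksub n j. (x S)^2))"
proof -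
  have "(p S + t * x S - w S)^2 = (p S - w S)^2 + t * (2 * (x S * (p S - w S))) + t * (t * (x S)^2)" for S
    by (simp add: power2_eq_square algebra_simps)
  then show ?thesis
    unfolding ext_sqdist_def by (simp add: sum.distrib sum_distrib_left distrib_left)
qed

lemma proper_cone_nearest_point:
  assumes pc: "proper_cone n j L"
  obtains p where "p \<in> L" "\<And>x. x \<in> L \<Longrightarrow> ext_sqdist n j w p \<le> ext_sqdist n j w x"
proof -
  define c where "c = ext_sqdist n j w (\<lambda>_. 0)"
  define C where "C = {x. ext_sqdist n j w x \<le> c}"
  have "compact (L \<inter> C)"
  proof (rule compact_proper_cone_bounded_Int[OF pc, where b = "sqrt c"])
    show "closed C"
      unfolding C_def by (rule closed_Collect_le[OF continuous_on_ext_sqdist continuous_on_const])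
    fix x S assume "x \<in> C" "S \<in> ksub n j"
    then have "(x S - w S)^2 \<le> c"
      using member_le_sum[of S "ksub n j" "\<lambda>S. (x S - w S)^2"] by (simp add: C_def ext_sqdist_def)
    then show "\<bar>x S - w S\<bar> \<le> sqrt c" using real_sqrt_le_mono by fastforce
  qed
  moreover have zero: "(\<lambda>_. 0) \<in> L \<inter> C" using proper_cone_zero[OF pc] by (simp add: C_def c_def)
  ultimately obtain p where p: "p \<in> L \<inter> C" and min: "\<And>x. x \<in> L \<inter> C \<Longrightarrow> ext_sqdist n j w p \<le> ext_sqdist n j w x"
    using continuous_attains_inf[of "L \<inter> C" "ext_sqdist n j w"]
      continuous_on_subset[OF continuous_on_ext_sqdist] by blast
  have "ext_sqdist n j w p \<le> ext_sqdist n j w x" if "x \<in> L" for x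
    using min[of x] min[OF zero] that by (cases "x \<in> C") (auto simp: C_def c_def)
  then show thesis using that p by blast
qed

lemma nonneg_if_nonneg_add_small:
  fixes a b :: real
  assumes "\<And>t. 0 < t \<Longrightarrow> t \<le> 1 \<Longrightarrow> 0 \<le> a + t * b"
  shows "0 \<le> a"
proof (rule ccontr)
  assume a: "\<not> 0 \<le> a"
  show False
  proof (cases "b \<le> 0")
    case True
    then show False using assms[of 1] a by simp
  next
    case False
    define t where "t = min 1 (- a / (2 * b))"
    have t: "0 < t" "t \<le> 1" unfolding t_def using divide_pos_pos[of "- a" "2 * b"] a False by simp_all
    have "t * b \<le> (- a / (2 * b)) * b" using False by (intro mult_right_mono) (auto simp: t_def)
    also have "\<dots> = - a / 2" using False by (simp add: field_simps)
    finally show False using assms[OF t] a by simp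
  qed
qed

lemma nearest_point_first_order:
  assumes min: "\<And>x. x \<in> L \<Longrightarrow> ext_sqdist n j w p \<le> ext_sqdist n j w x"
    and segment: "\<And>t. 0 < t \<Longrightarrow> t \<le> 1 \<Longrightarrow> (\<lambda>S. p S + t * x S) \<in> L"
  shows "0 \<le> (\<Sum>S\<in>ksub n j. x S * (p S - w S))"
proof -
  let ?d = "\<Sum>S\<in>ksub n j. x S * (p S - w S)" and ?q = "\<Sum>S\<in>ksub n j. (x S)^2"
  have "0 \<le> 2 * ?d"
  proof (rule nonneg_if_nonneg_add_small[where b = ?q])
    fix t :: real assume t: "0 < t" "t \<le> 1"
    have "ext_sqdist n j w p \<le> ext_sqdist n j w (\<lambda>S. p S + t * x S)" by (rule min[OF segment[OF t]])
    then have "0 \<le> t * (2 * ?d + t * ?q)" unfolding ext_sqdist_add_scaled by simp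
    then show "0 \<le> 2 * ?d + t * ?q" using t by (simp add: zero_le_mult_iff)
  qed
  then show ?thesis by simp
qed

text \<open>Separation from a closed convex cone, by the nearest point p to w: the vector p - w
is in the dual cone and pairs negatively with w.\<close>

lemma dual_cone_separates:
  assumes pc: "proper_cone n j L" and w: "w \<in> ext_space n j" "w \<notin> L"
  obtains y where "y \<in> dual_cone n j L" "ext_inner n j w y < 0"
proof -
  let ?I = "ksub n j"
  let ?f = "ext_sqdist n j w"
  obtain p where pL: "p \<in> L" and pmin: "\<And>x. x \<in> L \<Longrightarrow> ?f p \<le> ?f x"
    using proper_cone_nearest_point[OF pc] by blast
  define y where "y = (\<lambda>S. if S \<in> ?I then p S - w S else 0)"
  have ye: "y \<in> ext_space n j" unfolding y_def ext_space_def by auto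
  have iy: "ext_inner n j x y = (\<Sum>S\<in>?I. x S * (p S - w S))" for x
    unfolding ext_inner_def y_def by (rule sum.cong) auto
  have first_order: "0 \<le> ext_inner n j x y" if "\<And>t. 0 < t \<Longrightarrow> t \<le> 1 \<Longrightarrow> (\<lambda>S. p S + t * x S) \<in> L" for x
    unfolding iy by (rule nearest_point_first_order[OF pmin that])
  have y_dual: "y \<in> dual_cone n j L"
    using ye first_order proper_cone_comb[OF pc pL, of _ 1] by (auto simp: dual_cone_def)
  have "0 \<le> ext_inner n j (\<lambda>S. - p S) y"
  proof (rule first_order)
    fix t :: real assume t: "0 < t" "t \<le> 1"
    have "(\<lambda>S. (1 - t) * p S + 0 * p S) \<in> L" using proper_cone_comb[OF pc pL pL, of "1 - t" 0] t by simp
    then show "(\<lambda>S. p S + t * - p S) \<in> L" by (simp add: algebra_simps)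
  qed
  then have "ext_inner n j p y = 0"
    using y_dual pL by (auto simp: dual_cone_def ext_inner_uminus_left)
  moreover have "ext_inner n j w y = ext_inner n j p y - ?f p"
    unfolding iy ext_sqdist_def by (simp add: sum_subtractf[symmetric] power2_eq_square algebra_simps)
  moreover have "0 < ?f p"
  proof -
    have "p \<in> ext_space n j" using proper_cone_subset[OF pc] pL by auto
    then obtain S where S: "S \<in> ?I" "p S \<noteq> w S"
      using ext_space_eqI[OF _ w(1)] pL w(2) by blast
    then have "0 < (p S - w S)^2" by simp
    also have "\<dots> \<le> ?f p"
      unfolding ext_sqdist_def by (rule member_le_sum[where f = "\<lambda>S. (p S - w S)^2"]) (use S in auto)
    finally show ?thesis .
  qed
  ultimately show thesis using that y_dual by simp
qed

lemma ext_inner_rel_int_pos: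
  assumes pc: "proper_cone n j L" and u: "u \<in> rel_int n j L"
    and y: "y \<in> dual_cone n j L" "y \<noteq> (\<lambda>_. 0)"
  shows "0 < ext_inner n j u y"
proof -
  have ye: "y \<in> ext_space n j" using y by (simp add: dual_cone_def)
  obtain S0 where S0: "S0 \<in> ksub n j" "y S0 \<noteq> 0" using ext_space_nonzero_coordinate[OF ye y(2)] .
  obtain e where e: "e > 0" "\<forall>z\<in>ext_space n j. (\<forall>S\<in>ksub n j. \<bar>z S - u S\<bar> < e) \<longrightarrow> z \<in> L"
    and uL: "u \<in> L" using u unfolding rel_int_def by blast
  have ue: "u \<in> ext_space n j" using proper_cone_subset[OF pc] uL by auto
  define z where "z = (\<lambda>S. u S - (if S = S0 then e/2 * sgn (y S0) else 0))"
  have "z \<in> ext_space n j" using ue S0(1) by (auto simp: z_def ext_space_def)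
  moreover have "\<forall>S\<in>ksub n j. \<bar>z S - u S\<bar> < e" using e(1) S0(2) by (auto simp: z_def abs_mult abs_sgn_eq)
  ultimately have "0 \<le> ext_inner n j z y" using e(2) y by (auto simp: dual_cone_def)
  moreover have "ext_inner n j z y = ext_inner n j u y - e/2 * \<bar>y S0\<bar>"
  proof -
    have "ext_inner n j z y = (\<Sum>S\<in>ksub n j. u S * y S - (if S = S0 then e/2 * (sgn (y S0) * y S0) else 0))"
      unfolding ext_inner_def z_def by (rule sum.cong) (auto simp: algebra_simps)
    then show ?thesis
      using S0(1) by (simp add: sum_subtractf ext_inner_def abs_sgn mult.commute)
  qed
  moreover have "0 < e/2 * \<bar>y S0\<bar>" using e(1) S0(2) by simp
  ultimately show ?thesis by linarith
qed

lemma rel_int_dual_coneI: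
  assumes pc: "proper_cone n j L" and ye: "y \<in> ext_space n j"
    and pos: "\<And>x. x \<in> L \<Longrightarrow> x \<noteq> (\<lambda>_. 0) \<Longrightarrow> 0 < ext_inner n j x y"
  shows "y \<in> rel_int n j (dual_cone n j L)"
proof -
  let ?I = "ksub n j"
  define Q where "Q = L \<inter> {x. (\<Sum>S\<in>?I. \<bar>x S\<bar>) = 1}"
  have y_dual: "y \<in> dual_cone n j L"
    using ye pos by (force simp: dual_cone_def)
  text \<open>Perturbing y by less than the minimum c of ext_inner x y over the l1-base Q of L
    stays in the dual cone.\<close>
  obtain c where c: "0 < c" "\<And>q. q \<in> Q \<Longrightarrow> c \<le> ext_inner n j q y"
  proof (cases "Q = {}")
    case True then show thesis using that[of 1] by simp
  next
    case False
    have "compact Q" unfolding Q_def by (rule compact_proper_cone_base[OF pc])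
    then obtain p where p: "p \<in> Q" "\<And>q. q \<in> Q \<Longrightarrow> ext_inner n j p y \<le> ext_inner n j q y"
      using continuous_attains_inf[OF _ False continuous_on_subset[OF continuous_on_ext_inner_left]] by blast
    have "p \<in> L" "p \<noteq> (\<lambda>_. 0)" using p(1) by (auto simp: Q_def)
    then show thesis using that[of "ext_inner n j p y"] pos p(2) by blast
  qed
  have "y' \<in> dual_cone n j L" if y'e: "y' \<in> ext_space n j" and close: "\<forall>S\<in>?I. \<bar>y' S - y S\<bar> < c" for y'
  proof -
    have "0 \<le> ext_inner n j x y'" if xL: "x \<in> L" and x0: "x \<noteq> (\<lambda>_. 0)" for x
    proof -
      define s where "s = (\<Sum>S\<in>?I. \<bar>x S\<bar>)"
      define xs where "xs = (\<lambda>S. (1/s) * x S)"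
      have s0: "0 < s" and xsL: "xs \<in> L" and xsn: "(\<Sum>S\<in>?I. \<bar>xs S\<bar>) = 1"
        and ixs: "ext_inner n j x y' = s * ext_inner n j xs y'"
        using proper_cone_normalize[OF pc xL x0] by (simp_all add: s_def xs_def)
      have ge: "c \<le> ext_inner n j xs y" using c(2) xsL xsn by (simp add: Q_def)
      have split: "ext_inner n j xs y' = ext_inner n j xs y + (\<Sum>S\<in>?I. xs S * (y' S - y S))"
        unfolding ext_inner_def by (simp add: sum.distrib[symmetric] algebra_simps)
      have "\<bar>\<Sum>S\<in>?I. xs S * (y' S - y S)\<bar> \<le> (\<Sum>S\<in>?I. \<bar>xs S\<bar> * c)"
        using close by (intro order_trans[OF sum_abs] sum_mono) (auto simp: abs_mult intro!: mult_left_mono)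
      also have "\<dots> = c" using xsn by (simp add: sum_distrib_right[symmetric])
      finally have "0 \<le> ext_inner n j xs y'" using split ge by linarith
      then show ?thesis using ixs s0 by simp
    qed
    then show "y' \<in> dual_cone n j L" using y'e by (force simp: dual_cone_def)
  qed
  then show ?thesis using y_dual c(1) unfolding rel_int_def by blast
qed

text \<open>Each point of the compact base is separated from its negative, which is not in L;
finitely many of these separating functionals suffice, and their sum is strictly positive.\<close>

lemma exists_strictly_positive_functional:
  assumes pc: "proper_cone n j L"
  obtains y where "y \<in> ext_space n j" "\<And>x. x \<in> L \<Longrightarrow> x \<noteq> (\<lambda>_. 0) \<Longrightarrow> 0 < ext_inner n j x y"
proof -
  let ?I = "ksub n j"
  define Q where "Q = L \<inter> {x. (\<Sum>S\<in>?I. \<bar>x S\<bar>) = 1}"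
  have "\<exists>y. y \<in> dual_cone n j L \<and> 0 < ext_inner n j q y" if q: "q \<in> Q" for q
  proof -
    have qL: "q \<in> L" and "q \<noteq> (\<lambda>_. 0)" using q by (auto simp: Q_def)
    then have "(\<lambda>S. - q S) \<notin> L" using proper_cone_pointed[OF pc qL] by auto
    moreover have "(\<lambda>S. - q S) \<in> ext_space n j" using proper_cone_subset[OF pc] qL by (auto simp: ext_space_def)
    ultimately obtain y where "y \<in> dual_cone n j L" "ext_inner n j (\<lambda>S. - q S) y < 0"
      using dual_cone_separates[OF pc] by blast
    then show ?thesis using ext_inner_uminus_left[of n j q y] by auto
  qed
  then obtain Y where Y: "\<And>q. q \<in> Q \<Longrightarrow> Y q \<in> dual_cone n j L \<and> 0 < ext_inner n j q (Y q)"
    by metis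
  have "Q \<subseteq> (\<Union>q\<in>Q. {x. 0 < ext_inner n j x (Y q)})" using Y by auto
  moreover have "open {x. 0 < ext_inner n j x (Y q)}" for q
    by (rule open_Collect_less[OF continuous_on_const continuous_on_ext_inner_left])
  ultimately obtain C where C: "C \<subseteq> Q" "finite C" "Q \<subseteq> (\<Union>q\<in>C. {x. 0 < ext_inner n j x (Y q)})"
    using compactE_image[OF compact_proper_cone_base[OF pc, folded Q_def]] by metis
  define y where "y = (\<lambda>S. \<Sum>q\<in>C. Y q S)"
  have "y \<in> ext_space n j"
    using Y C(1) by (auto simp: y_def ext_space_def dual_cone_def intro!: sum.neutral)
  moreover have inner_y: "ext_inner n j x y = (\<Sum>q\<in>C. ext_inner n j x (Y q))" for x
    unfolding ext_inner_def y_def by (simp add: sum_distrib_left sum.swap[of _ C])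
  have "0 < ext_inner n j x y" if xL: "x \<in> L" and x0: "x \<noteq> (\<lambda>_. 0)" for x
  proof -
    define s where "s = (\<Sum>S\<in>?I. \<bar>x S\<bar>)"
    define xs where "xs = (\<lambda>S. (1/s) * x S)"
    have s0: "0 < s" and xsQ: "xs \<in> Q" and ixs: "ext_inner n j x y = s * ext_inner n j xs y"
      using proper_cone_normalize[OF pc xL x0] by (simp_all add: s_def xs_def Q_def)
    then obtain q0 where q0: "q0 \<in> C" "0 < ext_inner n j xs (Y q0)" using C(3) by blast
    have "0 \<le> ext_inner n j xs (Y q)" if "q \<in> C" for q
      using Y[of q] C(1) that xsQ by (auto simp: dual_cone_def Q_def)
    then have "ext_inner n j xs (Y q0) \<le> (\<Sum>q\<in>C. ext_inner n j xs (Y q))"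
      using q0 C(2) by (intro member_le_sum) auto
    then show ?thesis using q0 inner_y ixs s0 by simp
  qed
  ultimately show thesis using that by blast
qed

lemma proper_cone_dual_cone:
  assumes pc: "proper_cone n j L"
  shows "proper_cone n j (dual_cone n j L)"
  unfolding proper_cone_def
proof (intro conjI)
  show "dual_cone n j L \<subseteq> ext_space n j" by (auto simp: dual_cone_def)
  show "\<forall>x\<in>dual_cone n j L. \<forall>y\<in>dual_cone n j L. \<forall>a\<ge>0. \<forall>b\<ge>0.
          (\<lambda>S. a * x S + b * y S) \<in> dual_cone n j L"
    by (auto simp: dual_cone_def ext_space_def ext_inner_comb_right)
  have "dual_cone n j L = ext_space n j \<inter> (\<Inter>x\<in>L. {y. 0 \<le> ext_inner n j x y})"
    by (auto simp: dual_cone_def)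
  moreover have "closed (ext_space n j \<inter> (\<Inter>x\<in>L. {y. 0 \<le> ext_inner n j x y}))"
    by (intro closed_Int closed_ext_space closed_INT ballI closed_Collect_le continuous_on_const
        continuous_on_ext_inner_right)
  ultimately show "closed (dual_cone n j L)" by simp
  show "\<forall>y\<in>dual_cone n j L. (\<lambda>S. - y S) \<in> dual_cone n j L \<longrightarrow> y = (\<lambda>_. 0)"
  proof (intro ballI impI)
    fix y assume y: "y \<in> dual_cone n j L" and my: "(\<lambda>S. - y S) \<in> dual_cone n j L"
    obtain u where u: "u \<in> rel_int n j L" using proper_cone_rel_int_nonempty[OF pc] by blast
    have "0 \<le> ext_inner n j u (\<lambda>S. - y S)" using my u rel_int_subset[of n j L] by (auto simp: dual_cone_def)
    moreover have "ext_inner n j u (\<lambda>S. - y S) = - ext_inner n j u y"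
      using ext_inner_comb_right[of n j u "-1" y 0 y] by simp
    ultimately show "y = (\<lambda>_. 0)" using ext_inner_rel_int_pos[OF pc u y] by force
  qed
  obtain y where "y \<in> ext_space n j" "\<And>x. x \<in> L \<Longrightarrow> x \<noteq> (\<lambda>_. 0) \<Longrightarrow> 0 < ext_inner n j x y"
    using exists_strictly_positive_functional[OF pc] by blast
  then show "rel_int n j (dual_cone n j L) \<noteq> {}" using rel_int_dual_coneI[OF pc] by blast
qed

definition ext_lin :: "nat \<Rightarrow> nat \<Rightarrow> (nat set \<Rightarrow> nat set \<Rightarrow> real) \<Rightarrow> (nat set \<Rightarrow> real) \<Rightarrow> (nat set \<Rightarrow> real)" where
  "ext_lin n j a x = (\<lambda>S. if S \<in> ksub n j then \<Sum>T\<in>ksub n j. a S T * x T else 0)"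

lemma ext_lin_in_ext_space: "ext_lin n j a x \<in> ext_space n j"
  unfolding ext_lin_def ext_space_def by auto

lemma ext_inner_ext_lin_transpose:
  "ext_inner n j x (ext_lin n j a y) = ext_inner n j (ext_lin n j (\<lambda>S T. a T S) x) y"
proof -
  have "ext_inner n j x (ext_lin n j a y) = (\<Sum>S\<in>ksub n j. \<Sum>T\<in>ksub n j. x S * (a S T * y T))"
    unfolding ext_inner_def ext_lin_def by (simp add: sum_distrib_left)
  also have "\<dots> = (\<Sum>T\<in>ksub n j. \<Sum>S\<in>ksub n j. a S T * x S * y T)"
    by (subst sum.swap) (simp add: algebra_simps)
  also have "\<dots> = (\<Sum>T\<in>ksub n j. (\<Sum>S\<in>ksub n j. a S T * x S) * y T)"
    by (simp add: sum_distrib_right)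
  also have "\<dots> = ext_inner n j (ext_lin n j (\<lambda>S T. a T S) x) y"
    unfolding ext_inner_def ext_lin_def by (rule sum.cong) auto
  finally show ?thesis .
qed

lemma dual_cone_ext_lin_invariant:
  assumes "\<And>z. z \<in> L \<Longrightarrow> ext_lin n j (\<lambda>S T. a T S) z \<in> L" and "y \<in> dual_cone n j L"
  shows "ext_lin n j a y \<in> dual_cone n j L"
  using assms ext_lin_in_ext_space unfolding dual_cone_def by (auto simp: ext_inner_ext_lin_transpose)

lemma dual_cone_ext_lin_rel_int:
  assumes pc: "proper_cone n j L"
    and h: "\<And>z. z \<in> L \<Longrightarrow> z \<noteq> (\<lambda>_. 0) \<Longrightarrow> ext_lin n j (\<lambda>S T. a T S) z \<in> rel_int n j L"
    and y: "y \<in> dual_cone n j L" "y \<noteq> (\<lambda>_. 0)"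
  shows "ext_lin n j a y \<in> rel_int n j (dual_cone n j L)"
proof (rule rel_int_dual_coneI[OF pc ext_lin_in_ext_space])
  fix x assume "x \<in> L" "x \<noteq> (\<lambda>_. 0)"
  then show "0 < ext_inner n j x (ext_lin n j a y)"
    unfolding ext_inner_ext_lin_transpose by (rule ext_inner_rel_int_pos[OF pc h y])
qed


section \<open>Complementation and the compound of the inverse\<close>

lemma ksub_Compl: "S \<in> ksub n j \<Longrightarrow> {..<n} - S \<in> ksub n (n - j)"
  unfolding ksub_def by (auto simp: card_Diff_subset finite_subset)

lemma ksub_Compl_Compl: "W \<in> ksub n m \<Longrightarrow> {..<n} - ({..<n} - W) = W"
  unfolding ksub_def by auto

lemma ksub_Compl': "W \<in> ksub n (n - j) \<Longrightarrow> j \<le> n \<Longrightarrow> {..<n} - W \<in> ksub n j"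
  using ksub_Compl[of W n "n - j"] by simp

lemma sum_ksub_Compl:
  assumes "j \<le> n"
  shows "(\<Sum>W\<in>ksub n (n - j). g W) = (\<Sum>T\<in>ksub n j. g ({..<n} - T))"
  by (rule sum.reindex_bij_witness[of _ "\<lambda>T. {..<n} - T" "\<lambda>W. {..<n} - W"])
     (auto simp: ksub_Compl_Compl ksub_Compl ksub_Compl'[OF _ assms])

text \<open>Up to the signs compl_sign, the Hodge star: it sends the basis vector e_S of the j-th
exterior power to e_(complement of S) in the (n-j)-th one.\<close>

definition hodge :: "nat \<Rightarrow> nat \<Rightarrow> (nat set \<Rightarrow> real) \<Rightarrow> (nat set \<Rightarrow> real)" where
  "hodge n j z = (\<lambda>U. if U \<in> ksub n (n - j) then compl_sign n ({..<n} - U) * z ({..<n} - U) else 0)"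

definition hodge_inv :: "nat \<Rightarrow> nat \<Rightarrow> (nat set \<Rightarrow> real) \<Rightarrow> (nat set \<Rightarrow> real)" where
  "hodge_inv n j w = (\<lambda>S. if S \<in> ksub n j then compl_sign n S * w ({..<n} - S) else 0)"

definition hodge_preimage :: "nat \<Rightarrow> nat \<Rightarrow> (nat set \<Rightarrow> real) set \<Rightarrow> (nat set \<Rightarrow> real) set" where
  "hodge_preimage n j K = {z \<in> ext_space n j. hodge n j z \<in> K}"

lemma hodge_in_ext_space: "hodge n j z \<in> ext_space n (n - j)"
  unfolding hodge_def ext_space_def by auto

lemma hodge_inv_in_ext_space: "hodge_inv n j w \<in> ext_space n j"
  unfolding hodge_inv_def ext_space_def by auto

lemma hodge_inv_hodge:
  assumes "j \<le> n" "z \<in> ext_space n j"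
  shows "hodge_inv n j (hodge n j z) = z"
proof
  fix S show "hodge_inv n j (hodge n j z) S = z S"
    using assms ksub_Compl[of S n j] ksub_Compl_Compl[of S n j]
    by (auto simp: hodge_inv_def hodge_def ext_space_def mult.assoc[symmetric])
qed

lemma hodge_hodge_inv:
  assumes "j \<le> n" "w \<in> ext_space n (n - j)"
  shows "hodge n j (hodge_inv n j w) = w"
proof
  fix U show "hodge n j (hodge_inv n j w) U = w U"
    using assms ksub_Compl'[of U n j] ksub_Compl_Compl[of U n "n - j"]
    by (auto simp: hodge_inv_def hodge_def ext_space_def mult.assoc[symmetric])
qed

lemma hodge_eq_zeroD:
  assumes "j \<le> n" "z \<in> ext_space n j" "hodge n j z = (\<lambda>_. 0)"
  shows "z = (\<lambda>_. 0)"
proof -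
  have "z = hodge_inv n j (\<lambda>_. 0)" using hodge_inv_hodge[OF assms(1,2)] assms(3) by simp
  then show ?thesis by (auto simp: hodge_inv_def)
qed

lemma hodge_comb: "hodge n j (\<lambda>S. a * x S + b * y S) = (\<lambda>U. a * hodge n j x U + b * hodge n j y U)"
  unfolding hodge_def by (auto simp: algebra_simps)

lemma continuous_on_hodge: "continuous_on UNIV (hodge n j)"
  unfolding hodge_def
proof (intro continuous_on_coordinatewise_then_product)
  fix U
  show "continuous_on UNIV (\<lambda>z :: nat set \<Rightarrow> real. if U \<in> ksub n (n - j) then compl_sign n ({..<n} - U) * z ({..<n} - U) else 0)"
    by (cases "U \<in> ksub n (n - j)") (auto intro!: continuous_intros)
qed

lemma rel_int_hodge_preimage:
  assumes j: "j \<le> n" and w: "w \<in> rel_int n (n - j) K" and K: "K \<subseteq> ext_space n (n - j)"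
  shows "hodge_inv n j w \<in> rel_int n j (hodge_preimage n j K)"
proof -
  obtain e where e: "e > 0" "\<forall>y\<in>ext_space n (n - j). (\<forall>S\<in>ksub n (n - j). \<bar>y S - w S\<bar> < e) \<longrightarrow> y \<in> K"
    and wK: "w \<in> K" using w unfolding rel_int_def by blast
  have "hodge_inv n j w \<in> hodge_preimage n j K"
    using hodge_hodge_inv[OF j] wK K hodge_inv_in_ext_space by (auto simp: hodge_preimage_def)
  moreover have "\<forall>y\<in>ext_space n j. (\<forall>S\<in>ksub n j. \<bar>y S - hodge_inv n j w S\<bar> < e) \<longrightarrow> y \<in> hodge_preimage n j K"
  proof (intro ballI impI)
    fix y assume y: "y \<in> ext_space n j" and close: "\<forall>S\<in>ksub n j. \<bar>y S - hodge_inv n j w S\<bar> < e"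
    have "\<bar>hodge n j y U - w U\<bar> < e" if U: "U \<in> ksub n (n - j)" for U
    proof -
      have c: "{..<n} - U \<in> ksub n j" by (rule ksub_Compl'[OF U j])
      have "\<bar>compl_sign n ({..<n} - U) :: real\<bar> = 1" by (simp add: compl_sign_def)
      moreover have "hodge n j y U - w U
          = compl_sign n ({..<n} - U) * (y ({..<n} - U) - hodge_inv n j w ({..<n} - U))"
        using U c ksub_Compl_Compl[OF U]
        by (simp add: hodge_def hodge_inv_def algebra_simps mult.assoc[symmetric])
      ultimately show ?thesis using close c by (simp add: abs_mult)
    qed
    then have "hodge n j y \<in> K" using e(2) hodge_in_ext_space by blast
    then show "y \<in> hodge_preimage n j K" using y by (simp add: hodge_preimage_def)
  qed
  ultimately show ?thesis using e(1) unfolding rel_int_def by blast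
qed

lemma proper_cone_hodge_preimage:
  assumes j: "j \<le> n" and pc: "proper_cone n (n - j) K"
  shows "proper_cone n j (hodge_preimage n j K)"
  unfolding proper_cone_def
proof (intro conjI)
  show "hodge_preimage n j K \<subseteq> ext_space n j" by (auto simp: hodge_preimage_def)
  show "\<forall>x\<in>hodge_preimage n j K. \<forall>y\<in>hodge_preimage n j K. \<forall>a\<ge>0. \<forall>b\<ge>0.
      (\<lambda>S. a * x S + b * y S) \<in> hodge_preimage n j K"
    using proper_cone_comb[OF pc] by (auto simp: hodge_preimage_def hodge_comb ext_space_def)
  have "hodge_preimage n j K = ext_space n j \<inter> (hodge n j -` K)" by (auto simp: hodge_preimage_def)
  moreover have "closed (ext_space n j \<inter> (hodge n j -` K))"
    by (intro closed_Int closed_ext_space closed_vimage[OF proper_cone_closed[OF pc] continuous_on_hodge])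
  ultimately show "closed (hodge_preimage n j K)" by simp
  show "\<forall>x\<in>hodge_preimage n j K. (\<lambda>S. - x S) \<in> hodge_preimage n j K \<longrightarrow> x = (\<lambda>_. 0)"
  proof (intro ballI impI)
    fix x assume x: "x \<in> hodge_preimage n j K" and mx: "(\<lambda>S. - x S) \<in> hodge_preimage n j K"
    have "hodge n j (\<lambda>S. - x S) = (\<lambda>U. - hodge n j x U)" using hodge_comb[of n j "-1" x 0 x] by simp
    then have "hodge n j x = (\<lambda>_. 0)" using proper_cone_pointed[OF pc] x mx by (simp add: hodge_preimage_def)
    then show "x = (\<lambda>_. 0)" using hodge_eq_zeroD[OF j] x by (simp add: hodge_preimage_def)
  qed
  obtain w where "w \<in> rel_int n (n - j) K" using proper_cone_rel_int_nonempty[OF pc] by blast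
  then show "rel_int n j (hodge_preimage n j K) \<noteq> {}"
    using rel_int_hodge_preimage[OF j _ proper_cone_subset[OF pc]] by blast
qed

lemma compound_eq_ext_lin:
  "(\<lambda>x S. c * compound n j B x S) = ext_lin n j (\<lambda>S T. c * det (submatrix B S T))"
  unfolding compound_def ext_lin_def by (auto simp: sum_distrib_left mult.assoc intro!: ext)

lemma hodge_transpose_compound_inverse:
  fixes A B :: "real mat"
  assumes A: "A \<in> carrier_mat n n" and B: "B \<in> carrier_mat n n" and AB: "A * B = 1\<^sub>m n"
    and j: "j \<le> n"
  shows "hodge n j (ext_lin n j (\<lambda>S T. c * det (submatrix B T S)) z)
       = (\<lambda>U. (c / det A) * compound n (n - j) A (hodge n j z) U)"
proof
  fix U
  have dA: "det A \<noteq> 0" by (rule det_neq_0_if_right_inverse[OF A B AB])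
  show "hodge n j (ext_lin n j (\<lambda>S T. c * det (submatrix B T S)) z) U
      = (c / det A) * compound n (n - j) A (hodge n j z) U"
  proof (cases "U \<in> ksub n (n - j)")
    case False then show ?thesis by (simp add: hodge_def compound_def)
  next
    case True
    define S0 where "S0 = {..<n} - U"
    have S0: "S0 \<in> ksub n j" unfolding S0_def by (rule ksub_Compl'[OF True j])
    have U: "{..<n} - S0 = U" unfolding S0_def by (rule ksub_Compl_Compl[OF True])
    have minor: "compl_sign n S0 * det (submatrix B T S0)
        = compl_sign n T * det (submatrix A U ({..<n} - T)) / det A" if T: "T \<in> ksub n j" for T
    proof -
      have "det A * (compl_sign n T * compl_sign n S0 * det (submatrix B T S0))
          = det (submatrix A U ({..<n} - T))"
        using jacobi_complementary_minor[OF A B AB, of T S0] T S0 U by (auto simp: ksub_def)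
      then have "compl_sign n T * (compl_sign n T * compl_sign n S0 * det (submatrix B T S0))
          = compl_sign n T * det (submatrix A U ({..<n} - T)) / det A"
        using dA by (simp add: field_simps)
      then show ?thesis by (simp add: mult.assoc[symmetric])
    qed
    have "hodge n j (ext_lin n j (\<lambda>S T. c * det (submatrix B T S)) z) U
        = (\<Sum>T\<in>ksub n j. c * (compl_sign n S0 * det (submatrix B T S0)) * z T)"
      using True S0 by (simp add: hodge_def ext_lin_def S0_def sum_distrib_left algebra_simps)
    also have "\<dots> = (c / det A) * (\<Sum>T\<in>ksub n j. det (submatrix A U ({..<n} - T)) * (compl_sign n T * z T))"
      by (simp add: minor sum_distrib_left algebra_simps cong: sum.cong)
    also have "(\<Sum>T\<in>ksub n j. det (submatrix A U ({..<n} - T)) * (compl_sign n T * z T))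
        = (\<Sum>W\<in>ksub n (n - j). det (submatrix A U W) * hodge n j z W)"
      unfolding sum_ksub_Compl[OF j]
      by (rule sum.cong) (simp_all add: hodge_def ksub_Compl ksub_Compl_Compl)
    also have "(c / det A) * \<dots> = (c / det A) * compound n (n - j) A (hodge n j z) U"
      using True by (simp add: compound_def)
    finally show ?thesis .
  qed
qed


section \<open>The totally positive structure for the inverse\<close>

lemma ksub_0: "ksub n 0 = {{}}"
proof
  show "ksub n 0 \<subseteq> {{}}"
  proof
    fix S assume "S \<in> ksub n 0"
    then have "S \<subseteq> {..<n}" "card S = 0" by (auto simp: ksub_def)
    moreover from this have "finite S" by (meson finite_lessThan finite_subset)
    ultimately show "S \<in> {{}}" by simp
  qed
qed (auto simp: ksub_def)

lemma ksub_self: "ksub n n = {{..<n}}"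
proof
  show "ksub n n \<subseteq> {{..<n}}"
  proof
    fix S assume "S \<in> ksub n n"
    then have "S \<subseteq> {..<n}" "card S = n" by (auto simp: ksub_def)
    then have "S = {..<n}" using card_subset_eq[of "{..<n}" S] by simp
    then show "S \<in> {{..<n}}" by simp
  qed
qed (auto simp: ksub_def)

lemma ext_space_0_eqI: "x \<in> ext_space n 0 \<Longrightarrow> y \<in> ext_space n 0 \<Longrightarrow> x {} = y {} \<Longrightarrow> x = y"
  by (rule ext_space_eqI) (auto simp: ksub_0)

lemma compound_0:
  assumes "x \<in> ext_space n 0"
  shows "compound n 0 A x = x"
proof (rule ext_space_0_eqI[OF _ assms])
  show "compound n 0 A x \<in> ext_space n 0" by (simp add: compound_def ext_space_def)
  have "dim_row (submatrix A {} {}) = 0" "dim_col (submatrix A {} {}) = 0"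
    by (simp_all add: dim_submatrix)
  then have "det (submatrix A {} {}) = 1" by (intro det_dim_zero carrier_matI)
  then show "compound n 0 A x {} = x {}" by (simp add: compound_def ksub_0)
qed

lemma compound_zero [simp]: "compound n j A (\<lambda>_. 0) = (\<lambda>_. 0)"
  by (simp add: compound_def fun_eq_iff)

text \<open>A totally positive structure has no cone in degree 0; the duality between degrees j and
n - j needs one there for j = n.  Every compound acts on the 0-th exterior power as the identity,
so the nonnegative ray serves.\<close>

definition nonneg_ray :: "nat \<Rightarrow> (nat set \<Rightarrow> real) set" where
  "nonneg_ray n = {x \<in> ext_space n 0. 0 \<le> x {}}"

lemma rel_int_nonneg_ray:
  assumes x: "x \<in> nonneg_ray n" "x \<noteq> (\<lambda>_. 0)"
  shows "x \<in> rel_int n 0 (nonneg_ray n)"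
proof -
  have xe: "x \<in> ext_space n 0" and "0 \<le> x {}" using x by (auto simp: nonneg_ray_def)
  moreover have "x {} \<noteq> 0"
    using ext_space_0_eqI[OF xe, of "\<lambda>_. 0"] x(2) by (auto simp: ext_space_def)
  ultimately have "0 < x {}" by simp
  moreover have "\<forall>y\<in>ext_space n 0. (\<forall>S\<in>ksub n 0. \<bar>y S - x S\<bar> < x {}) \<longrightarrow> y \<in> nonneg_ray n"
    by (auto simp: ksub_0 nonneg_ray_def abs_less_iff)
  ultimately show ?thesis using x(1) unfolding rel_int_def by blast
qed

lemma proper_cone_nonneg_ray: "proper_cone n 0 (nonneg_ray n)"
  unfolding proper_cone_def
proof (intro conjI)
  show "nonneg_ray n \<subseteq> ext_space n 0" by (auto simp: nonneg_ray_def)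
  show "\<forall>x\<in>nonneg_ray n. \<forall>y\<in>nonneg_ray n. \<forall>a\<ge>0. \<forall>b\<ge>0. (\<lambda>S. a * x S + b * y S) \<in> nonneg_ray n"
    by (auto simp: nonneg_ray_def ext_space_def)
  have "nonneg_ray n = ext_space n 0 \<inter> {x. 0 \<le> x {}}" by (auto simp: nonneg_ray_def)
  moreover have "closed {x :: nat set \<Rightarrow> real. 0 \<le> x {}}"
    by (intro closed_Collect_le continuous_on_const continuous_on_product_coordinates)
  ultimately show "closed (nonneg_ray n)" using closed_ext_space by auto
  show "\<forall>x\<in>nonneg_ray n. (\<lambda>S. - x S) \<in> nonneg_ray n \<longrightarrow> x = (\<lambda>_. 0)"
  proof (intro ballI impI)
    fix x assume "x \<in> nonneg_ray n" "(\<lambda>S. - x S) \<in> nonneg_ray n"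
    then have "x \<in> ext_space n 0" "x {} = 0" by (auto simp: nonneg_ray_def)
    then show "x = (\<lambda>_. 0)" by (intro ext_space_0_eqI) (auto simp: ext_space_def)
  qed
  define v where "v = (\<lambda>S::nat set. if S = {} then 1 else (0::real))"
  have "v \<in> nonneg_ray n" "v \<noteq> (\<lambda>_. 0)" by (auto simp: v_def nonneg_ray_def ext_space_def ksub_0 fun_eq_iff)
  then show "rel_int n 0 (nonneg_ray n) \<noteq> {}" using rel_int_nonneg_ray by blast
qed

definition extended_cone :: "nat \<Rightarrow> (nat \<Rightarrow> (nat set \<Rightarrow> real) set) \<Rightarrow> nat \<Rightarrow> (nat set \<Rightarrow> real) set" where
  "extended_cone n Ks m = (if m = 0 then nonneg_ray n else Ks m)"

definition extended_sign :: "(nat \<Rightarrow> real) \<Rightarrow> nat \<Rightarrow> real" where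
  "extended_sign \<epsilon> m = (if m = 0 then 1 else \<epsilon> m)"

definition inverse_structure :: "nat \<Rightarrow> (nat \<Rightarrow> (nat set \<Rightarrow> real) set) \<Rightarrow> nat \<Rightarrow> (nat set \<Rightarrow> real) set" where
  "inverse_structure n Ks j = dual_cone n j (hodge_preimage n j (extended_cone n Ks (n - j)))"

lemma proper_cone_extended_cone:
  assumes "tp_structure n Ks" "j \<in> {1..n}"
  shows "proper_cone n (n - j) (extended_cone n Ks (n - j))"
  using assms proper_cone_nonneg_ray by (auto simp: extended_cone_def tp_structure_def)

lemma tp_structure_inverse_structure:
  assumes "tp_structure n Ks"
  shows "tp_structure n (inverse_structure n Ks)"
  unfolding tp_structure_def inverse_structure_def
proof
  fix j assume j: "j \<in> {1..n}"
  then have "j \<le> n" by simp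
  then show "proper_cone n j (dual_cone n j (hodge_preimage n j (extended_cone n Ks (n - j))))"
    by (intro proper_cone_dual_cone proper_cone_hodge_preimage proper_cone_extended_cone[OF assms j])
qed

lemma extended_sign_pm1:
  assumes "\<forall>j\<in>{1..n}. \<epsilon> j \<in> {-1, 1}" "j \<in> {1..n}" "(d::real) \<noteq> 0"
  shows "extended_sign \<epsilon> (n - j) * sgn d \<in> {-1, 1}"
proof -
  have "extended_sign \<epsilon> (n - j) \<in> {-1, 1}"
    using assms(1,2) by (auto simp: extended_sign_def)
  moreover have "sgn d \<in> {-1, 1}" using assms(3) by (auto simp: sgn_if)
  ultimately show ?thesis by auto
qed

lemma K_nonneg_extended_cone:
  assumes "j \<in> {1..n}" and "\<forall>j\<in>{1..n}. K_nonneg (Ks j) (\<lambda>x S. \<epsilon> j * compound n j A x S)"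
  shows "K_nonneg (extended_cone n Ks (n - j)) (\<lambda>x S. extended_sign \<epsilon> (n - j) * compound n (n - j) A x S)"
proof (cases "n - j = 0")
  case True
  then show ?thesis
    by (auto simp: K_nonneg_def extended_cone_def extended_sign_def nonneg_ray_def compound_0)
next
  case False
  then show ?thesis using assms by (auto simp: extended_cone_def extended_sign_def)
qed

lemma K_pos_extended_cone:
  assumes "j \<in> {1..n}" and "\<forall>j\<in>{1..n}. K_pos n j (Ks j) (\<lambda>x S. \<epsilon> j * compound n j A x S)"
  shows "K_pos n (n - j) (extended_cone n Ks (n - j)) (\<lambda>x S. extended_sign \<epsilon> (n - j) * compound n (n - j) A x S)"
proof (cases "n - j = 0")
  case True
  then show ?thesis
    using rel_int_nonneg_ray
    by (auto simp: K_pos_def extended_cone_def extended_sign_def nonneg_ray_def compound_0)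
next
  case False
  then show ?thesis using assms by (auto simp: extended_cone_def extended_sign_def)
qed

lemma hodge_signed_compound_inverse:
  fixes A B :: "real mat"
  assumes A: "A \<in> carrier_mat n n" and B: "B \<in> carrier_mat n n" and AB: "A * B = 1\<^sub>m n"
    and j: "j \<le> n" and dA: "det A \<noteq> 0"
  shows "hodge n j (ext_lin n j (\<lambda>S T. (e * sgn (det A)) * det (submatrix B T S)) z)
       = (\<lambda>U. (1 / \<bar>det A\<bar>) * (e * compound n (n - j) A (hodge n j z) U))"
proof -
  have "e * sgn (det A) / det A = 1 / \<bar>det A\<bar> * e" using dA by (cases "det A > 0") (auto simp: sgn_if)
  then show ?thesis unfolding hodge_transpose_compound_inverse[OF A B AB j] by (simp add: mult.assoc)
qed

lemma K_nonneg_inverse_structure: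
  fixes A B :: "real mat"
  assumes A: "A \<in> carrier_mat n n" and B: "B \<in> carrier_mat n n" and AB: "A * B = 1\<^sub>m n"
    and dA: "det A \<noteq> 0" and tp: "tp_structure n Ks" and j: "j \<in> {1..n}"
    and H: "\<forall>j\<in>{1..n}. K_nonneg (Ks j) (\<lambda>x S. \<epsilon> j * compound n j A x S)"
  shows "K_nonneg (inverse_structure n Ks j) (\<lambda>x S. (extended_sign \<epsilon> (n - j) * sgn (det A)) * compound n j B x S)"
proof -
  let ?K = "extended_cone n Ks (n - j)"
  let ?e = "extended_sign \<epsilon> (n - j)"
  have pc: "proper_cone n (n - j) ?K" by (rule proper_cone_extended_cone[OF tp j])
  have "ext_lin n j (\<lambda>S T. (?e * sgn (det A)) * det (submatrix B S T)) y \<in> inverse_structure n Ks j"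
    if y: "y \<in> inverse_structure n Ks j" for y
    unfolding inverse_structure_def
  proof (rule dual_cone_ext_lin_invariant[OF _ y[unfolded inverse_structure_def]])
    fix z assume "z \<in> hodge_preimage n j ?K"
    then have "(\<lambda>U. ?e * compound n (n - j) A (hodge n j z) U) \<in> ?K"
      using K_nonneg_extended_cone[OF j H] by (simp add: hodge_preimage_def K_nonneg_def)
    then have "(\<lambda>U. (1 / \<bar>det A\<bar>) * (?e * compound n (n - j) A (hodge n j z) U)) \<in> ?K"
      by (rule proper_cone_scale[OF pc]) simp
    then show "ext_lin n j (\<lambda>S T. (?e * sgn (det A)) * det (submatrix B T S)) z \<in> hodge_preimage n j ?K"
      using hodge_signed_compound_inverse[OF A B AB _ dA] j ext_lin_in_ext_space
      by (simp add: hodge_preimage_def)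
  qed
  then show ?thesis unfolding K_nonneg_def compound_eq_ext_lin by blast
qed

lemma K_pos_inverse_structure:
  fixes A B :: "real mat"
  assumes A: "A \<in> carrier_mat n n" and B: "B \<in> carrier_mat n n" and AB: "A * B = 1\<^sub>m n"
    and dA: "det A \<noteq> 0" and tp: "tp_structure n Ks" and j: "j \<in> {1..n}"
    and H: "\<forall>j\<in>{1..n}. K_pos n j (Ks j) (\<lambda>x S. \<epsilon> j * compound n j A x S)"
  shows "K_pos n j (inverse_structure n Ks j) (\<lambda>x S. (extended_sign \<epsilon> (n - j) * sgn (det A)) * compound n j B x S)"
proof -
  have jn: "j \<le> n" using j by simp
  let ?K = "extended_cone n Ks (n - j)"
  let ?e = "extended_sign \<epsilon> (n - j)"
  have pc: "proper_cone n (n - j) ?K" by (rule proper_cone_extended_cone[OF tp j])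
  have "ext_lin n j (\<lambda>S T. (?e * sgn (det A)) * det (submatrix B S T)) y \<in> rel_int n j (inverse_structure n Ks j)"
    if y: "y \<in> inverse_structure n Ks j" "y \<noteq> (\<lambda>_. 0)" for y
    unfolding inverse_structure_def
  proof (rule dual_cone_ext_lin_rel_int[OF proper_cone_hodge_preimage[OF jn pc]])
    show "y \<in> dual_cone n j (hodge_preimage n j ?K)" "y \<noteq> (\<lambda>_. 0)"
      using y by (simp_all add: inverse_structure_def)
  next
    fix z assume z: "z \<in> hodge_preimage n j ?K" and z0: "z \<noteq> (\<lambda>_. 0)"
    then have "hodge n j z \<in> ?K" "hodge n j z \<noteq> (\<lambda>_. 0)"
      using hodge_eq_zeroD[OF jn] by (auto simp: hodge_preimage_def)
    then have "(\<lambda>U. ?e * compound n (n - j) A (hodge n j z) U) \<in> rel_int n (n - j) ?K"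
      using K_pos_extended_cone[OF j H] by (simp add: K_pos_def)
    then have "(\<lambda>U. (1 / \<bar>det A\<bar>) * (?e * compound n (n - j) A (hodge n j z) U)) \<in> rel_int n (n - j) ?K"
      by (rule rel_int_scale[OF pc]) (use dA in simp)
    then have "hodge_inv n j (hodge n j (ext_lin n j (\<lambda>S T. (?e * sgn (det A)) * det (submatrix B T S)) z))
        \<in> rel_int n j (hodge_preimage n j ?K)"
      unfolding hodge_signed_compound_inverse[OF A B AB jn dA]
      by (rule rel_int_hodge_preimage[OF jn _ proper_cone_subset[OF pc]])
    then show "ext_lin n j (\<lambda>S T. (?e * sgn (det A)) * det (submatrix B T S)) z \<in> rel_int n j (hodge_preimage n j ?K)"
      by (simp add: hodge_inv_hodge[OF jn ext_lin_in_ext_space])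
  qed
  then show ?thesis unfolding K_pos_def compound_eq_ext_lin by blast
qed


lemma proper_cone_exists_nonzero:
  assumes pc: "proper_cone n j K" and S: "S \<in> ksub n j"
  obtains x where "x \<in> K" "x \<noteq> (\<lambda>_. 0)"
proof -
  obtain u e where uK: "u \<in> K" and e: "e > 0"
    and ball: "\<forall>y\<in>ext_space n j. (\<forall>S\<in>ksub n j. \<bar>y S - u S\<bar> < e) \<longrightarrow> y \<in> K"
    using proper_cone_rel_int_nonempty[OF pc] unfolding rel_int_def by blast
  define v where "v = (\<lambda>T. u T + (if T = S then e/2 else 0))"
  have "v \<in> ext_space n j"
    using uK proper_cone_subset[OF pc] S by (auto simp: v_def ext_space_def)
  moreover have "\<forall>T\<in>ksub n j. \<bar>v T - u T\<bar> < e" using e by (simp add: v_def)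
  ultimately have "v \<in> K" using ball by blast
  moreover have "u S \<noteq> 0 \<or> v S \<noteq> 0" using e by (auto simp: v_def)
  ultimately show thesis using that uK by metis
qed

lemma compound_self:
  assumes A: "A \<in> carrier_mat n n" and x: "x \<in> ext_space n n"
  shows "compound n n A x = (\<lambda>S. det A * x S)"
proof -
  have "submatrix A {..<n} {..<n} = submatrix A UNIV UNIV"
    by (rule submatrix_cong) (use A in auto)
  then have "submatrix A {..<n} {..<n} = A" by (simp add: submatrix_UNIV)
  then show ?thesis
    using x by (auto simp: compound_def ksub_self ext_space_def fun_eq_iff)
qed

lemma det_pos_if_K_nonneg_compound_self:
  fixes A :: "real mat"
  assumes A: "A \<in> carrier_mat n n" and dA: "det A \<noteq> 0"
    and pc: "proper_cone n n K" and H: "K_nonneg K (compound n n A)"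
  shows "det A > 0"
proof (rule ccontr)
  assume "\<not> det A > 0"
  then have neg: "det A < 0" using dA by simp
  obtain x where xK: "x \<in> K" and x0: "x \<noteq> (\<lambda>_. 0)"
    using proper_cone_exists_nonzero[OF pc] ksub_self by blast
  have "x \<in> ext_space n n" using xK proper_cone_subset[OF pc] by auto
  moreover have "compound n n A x \<in> K" using H xK by (simp add: K_nonneg_def)
  ultimately have "(\<lambda>S. det A * x S) \<in> K" by (simp add: compound_self[OF A])
  from proper_cone_scale[OF pc this, of "- 1 / det A"] have "(\<lambda>S. - x S) \<in> K"
    using neg by simp
  then show False using proper_cone_pointed[OF pc xK] x0 by simp
qed

lemma K_nonneg_if_K_pos:
  assumes pc: "proper_cone n j K" and H: "K_pos n j K f" and f0: "f (\<lambda>_. 0) = (\<lambda>_. 0)"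
  shows "K_nonneg K f"
  using H proper_cone_zero[OF pc] f0 rel_int_subset by (fastforce simp: K_nonneg_def K_pos_def)

lemma GSR_inverse:
  assumes A: "A \<in> carrier_mat n n" and B: "B \<in> carrier_mat n n" and AB: "A * B = 1\<^sub>m n"
    and tp: "tp_structure n Ks" and GSR: "GSR n Ks A"
  shows "GSR n (inverse_structure n Ks) B"
proof -
  have dA: "det A \<noteq> 0" by (rule det_neq_0_if_right_inverse[OF A B AB])
  obtain \<epsilon> where \<epsilon>: "\<forall>j\<in>{1..n}. \<epsilon> j \<in> {-1, 1}"
    and H: "\<forall>j\<in>{1..n}. K_nonneg (Ks j) (\<lambda>x S. \<epsilon> j * compound n j A x S)"
    using GSR unfolding GSR_def by blast
  show ?thesis unfolding GSR_def
    using extended_sign_pm1[OF \<epsilon> _ dA] K_nonneg_inverse_structure[OF A B AB dA tp _ H]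
    by (intro exI[of _ "\<lambda>j. extended_sign \<epsilon> (n - j) * sgn (det A)"]) blast
qed

lemma GSSR_inverse:
  assumes A: "A \<in> carrier_mat n n" and B: "B \<in> carrier_mat n n" and AB: "A * B = 1\<^sub>m n"
    and tp: "tp_structure n Ks" and GSSR: "GSSR n Ks A"
  shows "GSSR n (inverse_structure n Ks) B"
proof -
  have dA: "det A \<noteq> 0" by (rule det_neq_0_if_right_inverse[OF A B AB])
  obtain \<epsilon> where \<epsilon>: "\<forall>j\<in>{1..n}. \<epsilon> j \<in> {-1, 1}"
    and H: "\<forall>j\<in>{1..n}. K_pos n j (Ks j) (\<lambda>x S. \<epsilon> j * compound n j A x S)"
    using GSSR unfolding GSSR_def by blast
  show ?thesis unfolding GSSR_def
    using extended_sign_pm1[OF \<epsilon> _ dA] K_pos_inverse_structure[OF A B AB dA tp _ H]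
    by (intro exI[of _ "\<lambda>j. extended_sign \<epsilon> (n - j) * sgn (det A)"]) blast
qed

lemma GTP_inverse:
  assumes A: "A \<in> carrier_mat n n" and B: "B \<in> carrier_mat n n" and AB: "A * B = 1\<^sub>m n"
    and tp: "tp_structure n Ks" and GTP: "GTP n Ks A"
  shows "GTP n (inverse_structure n Ks) B"
  unfolding GTP_def
proof
  fix j assume j: "j \<in> {1..n}"
  have dA: "det A \<noteq> 0" by (rule det_neq_0_if_right_inverse[OF A B AB])
  have "n \<in> {1..n}" using j by simp
  then have "proper_cone n n (Ks n)" "K_nonneg (Ks n) (compound n n A)"
    using tp GTP by (simp_all add: tp_structure_def GTP_def)
  then have "det A > 0" by (intro det_pos_if_K_nonneg_compound_self[OF A dA])
  moreover have "K_nonneg (inverse_structure n Ks j)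
      (\<lambda>x S. (extended_sign (\<lambda>_. 1) (n - j) * sgn (det A)) * compound n j B x S)"
    using GTP by (intro K_nonneg_inverse_structure[OF A B AB dA tp j]) (simp add: GTP_def)
  ultimately show "K_nonneg (inverse_structure n Ks j) (compound n j B)"
    by (simp add: extended_sign_def)
qed

lemma GSTP_inverse:
  assumes A: "A \<in> carrier_mat n n" and B: "B \<in> carrier_mat n n" and AB: "A * B = 1\<^sub>m n"
    and tp: "tp_structure n Ks" and GSTP: "GSTP n Ks A"
  shows "GSTP n (inverse_structure n Ks) B"
  unfolding GSTP_def
proof
  fix j assume j: "j \<in> {1..n}"
  have dA: "det A \<noteq> 0" by (rule det_neq_0_if_right_inverse[OF A B AB])
  have "n \<in> {1..n}" and pc: "proper_cone n n (Ks n)" using j tp by (auto simp: tp_structure_def)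
  then have "K_nonneg (Ks n) (compound n n A)"
    using GSTP by (intro K_nonneg_if_K_pos[OF pc]) (auto simp: GSTP_def)
  then have "det A > 0" by (rule det_pos_if_K_nonneg_compound_self[OF A dA pc])
  moreover have "K_pos n j (inverse_structure n Ks j)
      (\<lambda>x S. (extended_sign (\<lambda>_. 1) (n - j) * sgn (det A)) * compound n j B x S)"
    using GSTP by (intro K_pos_inverse_structure[OF A B AB dA tp j]) (simp add: GSTP_def)
  ultimately show "K_pos n j (inverse_structure n Ks j) (compound n j B)"
    by (simp add: extended_sign_def)
qed

text \<open>The hypothesis B * A = 1 is implied by A * B = 1 and not needed.\<close>

theorem proposition20:
  fixes n :: nat and A B :: "real mat"
  assumes "A \<in> carrier_mat n n" and "B \<in> carrier_mat n n"
    and "A * B = 1\<^sub>m n" and "B * A = 1\<^sub>m n"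
  shows "(\<forall>Ks. tp_structure n Ks \<and> GSR n Ks A \<longrightarrow>
            (\<exists>Ks'. tp_structure n Ks' \<and> GSR n Ks' B))
       \<and> (\<forall>Ks. tp_structure n Ks \<and> GSSR n Ks A \<longrightarrow>
            (\<exists>Ks'. tp_structure n Ks' \<and> GSSR n Ks' B))
       \<and> (\<forall>Ks. tp_structure n Ks \<and> GTP n Ks A \<longrightarrow>
            (\<exists>Ks'. tp_structure n Ks' \<and> GTP n Ks' B))
       \<and> (\<forall>Ks. tp_structure n Ks \<and> GSTP n Ks A \<longrightarrow>
            (\<exists>Ks'. tp_structure n Ks' \<and> GSTP n Ks' B))"
  using tp_structure_inverse_structure GSR_inverse[OF assms(1-3)] GSSR_inverse[OF assms(1-3)]
    GTP_inverse[OF assms(1-3)] GSTP_inverse[OF assms(1-3)]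
  by blast

end
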